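(* Let $A=F/I$ where $I\subset F$ is a two-sided ideal generated by finitely many monomials, and let $M\subset\bigoplus_{i=1}^rA[-\delta_i]$ be a finitely generated monomial right submodule. Then $N=\bigoplus_iA[-\delta_i]/M$ has a minimal graded free right resolution in which every right syzygy module $M_i$ ($i\ge1$, with $M_1=M$) is finitely generated and monomial. Moreover, if $b_k(I)=0$ for all $k>d$ and $b_k(M)=0$ for all $k>\Delta$, then $b_k(M_i)=0$ for all $k>\Delta+(i-1)(d-1)$ and all $i\ge1$. (Such a resolution need not have finite length.)
   Context: $\mathbb K$ is a field, $F=\mathbb K\langle x_1,\dots,x_n\rangle$ the free associative algebra with standard grading and $W$ its set of monomials. $A[-\delta]_e=A_{e-\delta}$; $\bigoplus_iA[-\delta_i]$ is the graded free right $A$-module with basis $e_i$ of degree $\delta_i$. A right submodule of a graded free module $\bigoplus_jA[-\Delta_j]$ (basis $\epsilon_j$) is monomial if it is generated by elements of the form $\epsilon_j(w+I)$ with $w\in W$. A graded free right resolution of $N$ is an exact sequence $0\leftarrow N\leftarrow\bigoplus_iA[-\delta_i]\leftarrow\bigoplus_jA[-\delta'_j]\leftarrow\cdots$ of graded right module homomorphisms; $M_i$ is the kernel of the $(i+1)$-th map (so $M_0=N$, $M_1=M$), and the resolution is minimal if the images of the canonical bases are minimal homogeneous bases of the $M_i$. $b_k(\cdot)$ denotes the number of degree-$k$ elements in a minimal homogeneous basis (for $I$, as a two-sided ideal of $F$). *)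

theory Defs
  imports Main
begin

text \<open>
The variables of F = K<x_1,...,x_n> are indexed 0..n-1; a monomial (word)
is a list of such indices. An element of F is a finitely supported function
nat list => 'k. An element of the graded free right F-module with basis indexed by a
set J is a finitely supported function nat => nat list => 'k (coefficient of e_j w).
Since A = F/I, a right A-submodule X of a free A-module  (+)_{j in J} A[-D j]  is
represented by its full preimage in  (+)_{j in J} F, i.e. an F-submodule containing
Ipart = (+)_j e_j I; elements of the A-module are represented by lifts.
\<close>

definition isF :: "nat \<Rightarrow> (nat list \<Rightarrow> 'k::field) \<Rightarrow> bool" where
  "isF n f \<longleftrightarrow> finite {w. f w \<noteq> 0} \<and> (\<forall>w. f w \<noteq> 0 \<longrightarrow> set w \<subseteq> {..<n})"

definition isFree :: "nat \<Rightarrow> nat set \<Rightarrow> (nat \<Rightarrow> nat list \<Rightarrow> 'k::field) \<Rightarrow> bool" where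
  "isFree n J x \<longleftrightarrow> finite {(j, w). x j w \<noteq> 0} \<and>
     (\<forall>j w. x j w \<noteq> 0 \<longrightarrow> j \<in> J \<and> set w \<subseteq> {..<n})"

definition fmul :: "(nat list \<Rightarrow> 'k::field) \<Rightarrow> (nat list \<Rightarrow> 'k) \<Rightarrow> nat list \<Rightarrow> 'k" where
  "fmul f g w = (\<Sum>m\<in>{0..length w}. f (take m w) * g (drop m w))"

definition ract :: "(nat \<Rightarrow> nat list \<Rightarrow> 'k::field) \<Rightarrow> (nat list \<Rightarrow> 'k) \<Rightarrow> nat \<Rightarrow> nat list \<Rightarrow> 'k" where
  "ract x f i w = (\<Sum>m\<in>{0..length w}. x i (take m w) * f (drop m w))"

definition mono :: "nat list \<Rightarrow> nat list \<Rightarrow> 'k::field" where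
  "mono w = (\<lambda>u. if u = w then 1 else 0)"

definition vec :: "nat \<Rightarrow> nat list \<Rightarrow> nat \<Rightarrow> nat list \<Rightarrow> 'k::field" where
  "vec j w = (\<lambda>i u. if i = j \<and> u = w then 1 else 0)"

inductive_set tideal :: "nat \<Rightarrow> (nat list \<Rightarrow> 'k::field) set \<Rightarrow> (nat list \<Rightarrow> 'k) set"
  for n S where
  gen: "a \<in> S \<Longrightarrow> a \<in> tideal n S"
| zero: "(\<lambda>_. 0) \<in> tideal n S"
| add: "a \<in> tideal n S \<Longrightarrow> b \<in> tideal n S \<Longrightarrow> (\<lambda>w. a w + b w) \<in> tideal n S"
| lmul: "a \<in> tideal n S \<Longrightarrow> isF n f \<Longrightarrow> fmul f a \<in> tideal n S"
| rmul: "a \<in> tideal n S \<Longrightarrow> isF n f \<Longrightarrow> fmul a f \<in> tideal n S"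

inductive_set rsub :: "nat \<Rightarrow> (nat \<Rightarrow> nat list \<Rightarrow> 'k::field) set \<Rightarrow> (nat \<Rightarrow> nat list \<Rightarrow> 'k) set"
  for n S where
  gen: "x \<in> S \<Longrightarrow> x \<in> rsub n S"
| zero: "(\<lambda>_ _. 0) \<in> rsub n S"
| add: "x \<in> rsub n S \<Longrightarrow> y \<in> rsub n S \<Longrightarrow> (\<lambda>i w. x i w + y i w) \<in> rsub n S"
| rmul: "x \<in> rsub n S \<Longrightarrow> isF n f \<Longrightarrow> ract x f \<in> rsub n S"

text \<open>(+)_{j in J} e_j I, the kernel of (+)_j F -> (+)_j A.\<close>
definition Ipart :: "nat \<Rightarrow> nat set \<Rightarrow> (nat list \<Rightarrow> 'k::field) set \<Rightarrow> (nat \<Rightarrow> nat list \<Rightarrow> 'k) set" where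
  "Ipart n J I = {x. isFree n J x \<and> (\<forall>j. x j \<in> I)}"

definition homogF :: "int \<Rightarrow> (nat list \<Rightarrow> 'k::field) \<Rightarrow> bool" where
  "homogF e f \<longleftrightarrow> (\<forall>w. f w \<noteq> 0 \<longrightarrow> int (length w) = e)"

definition homog :: "(nat \<Rightarrow> int) \<Rightarrow> int \<Rightarrow> (nat \<Rightarrow> nat list \<Rightarrow> 'k::field) \<Rightarrow> bool" where
  "homog D e x \<longleftrightarrow> (\<forall>j w. x j w \<noteq> 0 \<longrightarrow> D j + int (length w) = e)"

definition minbasis_ideal :: "nat \<Rightarrow> (nat list \<Rightarrow> 'k::field) set \<Rightarrow> (nat list \<Rightarrow> 'k) set \<Rightarrow> bool" where
  "minbasis_ideal n I B \<longleftrightarrow> B \<subseteq> {f. isF n f} \<and> (\<forall>b\<in>B. \<exists>e. homogF e b) \<and>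
     I = tideal n B \<and> (\<forall>b\<in>B. b \<notin> tideal n (B - {b}))"

definition bI :: "nat \<Rightarrow> int \<Rightarrow> (nat list \<Rightarrow> 'k::field) set \<Rightarrow> nat" where
  "bI n k I = card {b \<in> (SOME B. minbasis_ideal n I B). homogF k b}"

text \<open>B (a set of homogeneous lifts) is a minimal homogeneous basis of the A-submodule
  represented by X in (+)_{j in J} A[-D j].\<close>
definition minbasis :: "nat \<Rightarrow> nat set \<Rightarrow> (nat \<Rightarrow> int) \<Rightarrow> (nat list \<Rightarrow> 'k::field) set
    \<Rightarrow> (nat \<Rightarrow> nat list \<Rightarrow> 'k) set \<Rightarrow> (nat \<Rightarrow> nat list \<Rightarrow> 'k) set \<Rightarrow> bool" where
  "minbasis n J D I X B \<longleftrightarrow> B \<subseteq> {x. isFree n J x} \<and> (\<forall>b\<in>B. \<exists>e. homog D e b) \<and>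
     X = rsub n (B \<union> Ipart n J I) \<and> (\<forall>b\<in>B. b \<notin> rsub n ((B - {b}) \<union> Ipart n J I))"

definition bM :: "nat \<Rightarrow> nat set \<Rightarrow> (nat \<Rightarrow> int) \<Rightarrow> (nat list \<Rightarrow> 'k::field) set
    \<Rightarrow> int \<Rightarrow> (nat \<Rightarrow> nat list \<Rightarrow> 'k) set \<Rightarrow> nat" where
  "bM n J D I k X = card {b \<in> (SOME B. minbasis n J D I X B). homog D k b}"

definition monomial_sub :: "nat \<Rightarrow> nat set \<Rightarrow> (nat list \<Rightarrow> 'k::field) set
    \<Rightarrow> (nat \<Rightarrow> nat list \<Rightarrow> 'k) set \<Rightarrow> bool" where
  "monomial_sub n J I X \<longleftrightarrow> (\<exists>S \<subseteq> {(j, w). j \<in> J \<and> set w \<subseteq> {..<n}}.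
     X = rsub n ((\<lambda>(j, w). vec j w) ` S \<union> Ipart n J I))"

definition fg_sub :: "nat \<Rightarrow> nat set \<Rightarrow> (nat list \<Rightarrow> 'k::field) set
    \<Rightarrow> (nat \<Rightarrow> nat list \<Rightarrow> 'k) set \<Rightarrow> bool" where
  "fg_sub n J I X \<longleftrightarrow> (\<exists>S. finite S \<and> S \<subseteq> {x. isFree n J x} \<and> X = rsub n (S \<union> Ipart n J I))"

definition monomial_ideal_fg :: "nat \<Rightarrow> (nat list \<Rightarrow> 'k::field) set \<Rightarrow> bool" where
  "monomial_ideal_fg n I \<longleftrightarrow> (\<exists>G. finite G \<and> (\<forall>w\<in>G. set w \<subseteq> {..<n}) \<and> I = tideal n (mono ` G))"

definition dmap :: "nat set \<Rightarrow> (nat \<Rightarrow> nat \<Rightarrow> nat list \<Rightarrow> 'k::field)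
    \<Rightarrow> (nat \<Rightarrow> nat list \<Rightarrow> 'k) \<Rightarrow> nat \<Rightarrow> nat list \<Rightarrow> 'k" where
  "dmap J g x = (\<lambda>i w. \<Sum>j\<in>{j\<in>J. \<exists>u. x j u \<noteq> 0}. ract (g j) (x j) i w)"

text \<open>Resolution data: P_k = (+)_{j in J k} A[-D k j] (k >= 0), and for k >= 1 the map
  P_k -> P_{k-1} sends e_j to g k j. P_0 -> N is the canonical projection.
  Msyz k (k >= 1) is the image of P_k -> P_{k-1}, i.e. the syzygy module M_k.\<close>
definition Msyz :: "nat \<Rightarrow> (nat list \<Rightarrow> 'k::field) set \<Rightarrow> (nat \<Rightarrow> nat set)
    \<Rightarrow> (nat \<Rightarrow> nat \<Rightarrow> nat \<Rightarrow> nat list \<Rightarrow> 'k) \<Rightarrow> nat \<Rightarrow> (nat \<Rightarrow> nat list \<Rightarrow> 'k) set" where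
  "Msyz n I J g k = rsub n (g k ` J k \<union> Ipart n (J (k - 1)) I)"

definition graded_free_res :: "nat \<Rightarrow> (nat list \<Rightarrow> 'k::field) set \<Rightarrow> (nat \<Rightarrow> nat set)
    \<Rightarrow> (nat \<Rightarrow> nat \<Rightarrow> int) \<Rightarrow> (nat \<Rightarrow> nat \<Rightarrow> nat \<Rightarrow> nat list \<Rightarrow> 'k)
    \<Rightarrow> (nat \<Rightarrow> nat list \<Rightarrow> 'k) set \<Rightarrow> bool" where
  "graded_free_res n I J D g M \<longleftrightarrow>
     (\<forall>k\<ge>1. \<forall>j\<in>J k. isFree n (J (k - 1)) (g k j) \<and> homog (D (k - 1)) (D k j) (g k j)) \<and>
     Msyz n I J g 1 = M \<and>
     (\<forall>k\<ge>1. Msyz n I J g (Suc k) =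
        {x. isFree n (J k) x \<and> dmap (J k) (g k) x \<in> Ipart n (J (k - 1)) I})"

definition minimal_res :: "nat \<Rightarrow> (nat list \<Rightarrow> 'k::field) set \<Rightarrow> (nat \<Rightarrow> nat set)
    \<Rightarrow> (nat \<Rightarrow> nat \<Rightarrow> int) \<Rightarrow> (nat \<Rightarrow> nat \<Rightarrow> nat \<Rightarrow> nat list \<Rightarrow> 'k) \<Rightarrow> bool" where
  "minimal_res n I J D g \<longleftrightarrow> (\<forall>k\<ge>1. inj_on (g k) (J k) \<and>
     minbasis n (J (k - 1)) (D (k - 1)) I (Msyz n I J g k) (g k ` J k))"

end

theory Submission
  imports Defs "HOL-Library.Function_Algebras" HOL.Vector_Spaces
begin

text \<open>
  Everything reduces to combinatorics of words. The ideal generated by a finite set of words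
  consists of the polynomials supported on the words having a factor in it, and a monomial
  submodule containing \<open>\<Oplus>\<^sub>j e\<^sub>j I\<close> consists of the vectors supported on a set \<open>U\<close> of positions
  \<open>(j, w)\<close> that is closed under appending letters on the right. Its minimal homogeneous basis is
  given by the minimal positions of \<open>U\<close> not in the ideal, and a projection argument shows that
  every minimal homogeneous basis has the same number of elements in each degree.

  Mapping one basis vector to each minimal position \<open>(a\<^sub>j, w\<^sub>j)\<close>, the kernel is again monomial:
  its positions are the \<open>(j, v)\<close> with \<open>w\<^sub>j v\<close> in the ideal. For a minimal such \<open>v\<close>, a minimal
  generator of the ideal ends \<open>w\<^sub>j v\<close> and starts inside \<open>w\<^sub>j\<close>, so \<open>|v| \<le> d - 1\<close>. This gives
  finitely many minimal positions at every step, and the degree of the \<open>i\<close>-th syzygies grows by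
  at most \<open>d - 1\<close> per step.
\<close>

section \<open>Counting with coordinate projections\<close>

definition fscale :: "'k::field \<Rightarrow> ('p \<Rightarrow> 'k) \<Rightarrow> 'p \<Rightarrow> 'k" where
  "fscale c f = (\<lambda>x. c * f x)"

interpretation fun_vs: vector_space "fscale :: 'k::field \<Rightarrow> ('p \<Rightarrow> 'k) \<Rightarrow> 'p \<Rightarrow> 'k"
  by unfold_locales (auto simp: fscale_def algebra_simps fun_eq_iff)

definition unit_fun :: "'p \<Rightarrow> 'p \<Rightarrow> 'k::field" where
  "unit_fun p = (\<lambda>q. if q = p then 1 else 0)"

lemma sum_fun_apply: "finite S \<Longrightarrow> (\<Sum>v\<in>S. f v) x = (\<Sum>v\<in>S. f v x)"
  by (induction S rule: finite_induct) auto

lemma inj_on_unit_fun: "inj_on (unit_fun :: 'p \<Rightarrow> 'p \<Rightarrow> 'k::field) P"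
  by (rule inj_onI) (auto simp: unit_fun_def fun_eq_iff split: if_splits)

lemma independent_unit_funs: "fun_vs.independent (unit_fun ` P :: ('p \<Rightarrow> 'k::field) set)"
  unfolding fun_vs.independent_explicit_finite_subsets
proof (intro allI impI ballI)
  fix S u v assume S: "S \<subseteq> unit_fun ` P" "finite S"
    and z: "(\<Sum>v\<in>S. fscale (u v) v) = 0" and v: "v \<in> S"
  then obtain p where p: "v = unit_fun p" by auto
  have "0 = (\<Sum>w\<in>S. fscale (u w) w) p" using z by simp
  also have "\<dots> = (\<Sum>w\<in>S. if w = v then u v else 0)"
    unfolding sum_fun_apply[OF S(2)]
  proof (rule sum.cong[OF refl])
    fix w assume "w \<in> S"
    with S(1) obtain q where "w = unit_fun q" by auto
    then show "fscale (u w) w p = (if w = v then u v else 0)"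
      using p by (auto simp: fscale_def unit_fun_def dest: fun_cong[of _ _ p])
  qed
  also have "\<dots> = u v" using S(2) v by simp
  finally show "u v = 0" by simp
qed

lemma in_span_unit_funs:
  assumes "finite P" "\<And>q. q \<notin> P \<Longrightarrow> f q = 0"
  shows "f \<in> fun_vs.span (unit_fun ` P)"
proof -
  have "f = (\<Sum>p\<in>P. fscale (f p) (unit_fun p))"
  proof
    fix q show "f q = (\<Sum>p\<in>P. fscale (f p) (unit_fun p)) q"
      using assms by (cases "q \<in> P")
        (simp_all add: sum_fun_apply fscale_def unit_fun_def if_distrib[of "\<lambda>x. _ * x"] cong: if_cong)
  qed
  also have "\<dots> \<in> fun_vs.span (unit_fun ` P)"
    by (intro fun_vs.span_sum fun_vs.span_scale fun_vs.span_base) auto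
  finally show ?thesis .
qed

lemma card_eq_if_projections_basis:
  fixes \<pi> :: "'v \<Rightarrow> 'p \<Rightarrow> 'k::field"
  assumes fin: "finite P"
    and supp: "\<And>b q. b \<in> B \<Longrightarrow> q \<notin> P \<Longrightarrow> \<pi> b q = 0"
    and span: "\<And>p. p \<in> P \<Longrightarrow> unit_fun p \<in> fun_vs.span (\<pi> ` B)"
    and indep: "\<And>b. b \<in> B \<Longrightarrow> \<pi> b \<notin> fun_vs.span (\<pi> ` (B - {b}))"
  shows "finite B \<and> card B = card P"
proof -
  have inj: "inj_on \<pi> B"
  proof (rule inj_onI, rule ccontr)
    fix x y assume xy: "x \<in> B" "y \<in> B" "\<pi> x = \<pi> y" "x \<noteq> y"
    then have "\<pi> x \<in> fun_vs.span (\<pi> ` (B - {x}))" by (auto intro!: fun_vs.span_base)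
    with indep xy show False by blast
  qed
  have "fun_vs.independent (\<pi> ` B)"
    unfolding fun_vs.dependent_def
  proof safe
    fix b assume b: "b \<in> B" and s: "\<pi> b \<in> fun_vs.span (\<pi> ` B - {\<pi> b})"
    have "\<pi> ` B - {\<pi> b} \<subseteq> \<pi> ` (B - {b})" by auto
    with s indep b show False using fun_vs.span_mono by blast
  qed
  moreover have "\<pi> ` B \<subseteq> fun_vs.span (unit_fun ` P)"
    using in_span_unit_funs[OF fin] supp by blast
  moreover have card_units: "card (unit_fun ` P :: ('p \<Rightarrow> 'k) set) = card P"
    by (rule card_image[OF inj_on_unit_fun])
  ultimately have up: "finite (\<pi> ` B)" "card (\<pi> ` B) \<le> card P"
    using fun_vs.independent_span_bound[OF finite_imageI[OF fin]] by metis+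
  have "card P \<le> card (\<pi> ` B)"
    using fun_vs.independent_span_bound[OF up(1) independent_unit_funs, of P] span card_units
    by auto
  then show ?thesis using up inj finite_image_iff card_image by fastforce
qed

section \<open>Words, monomials and supports\<close>

definition cmono :: "'k::field \<Rightarrow> nat list \<Rightarrow> nat list \<Rightarrow> 'k" where
  "cmono c a = (\<lambda>u. if u = a then c else 0)"

definition cvec :: "'k::field \<Rightarrow> nat \<Rightarrow> nat list \<Rightarrow> nat \<Rightarrow> nat list \<Rightarrow> 'k" where
  "cvec c j a = (\<lambda>i u. if i = j \<and> u = a then c else 0)"

lemma mono_cmono: "mono = cmono 1"
  unfolding mono_def cmono_def by (auto simp: fun_eq_iff)

lemma vec_cvec: "vec = cvec 1"
  unfolding vec_def cvec_def by (auto simp: fun_eq_iff)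

lemma sum_atLeastAtMost_single:
  fixes N k :: nat
  assumes "\<And>m. m \<le> N \<Longrightarrow> m \<noteq> k \<Longrightarrow> h m = 0"
  shows "(\<Sum>m\<in>{0..N}. h m) = (if k \<le> N then h k else 0)"
proof -
  have "(\<Sum>m\<in>{0..N}. h m) = (\<Sum>m\<in>{0..N}. if m = k then h m else 0)"
    using assms by (intro sum.cong) auto
  then show ?thesis by (simp add: sum.delta)
qed

lemma take_length_eq: "take m w = a \<Longrightarrow> m \<le> length w \<Longrightarrow> m = length a"
  by auto

lemma fmul_cmono_left:
  "fmul (cmono c a) g w =
     (if length a \<le> length w \<and> take (length a) w = a then c * g (drop (length a) w) else 0)"
  unfolding fmul_def cmono_def
  by (subst sum_atLeastAtMost_single[where k="length a"]) (auto dest: take_length_eq)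

lemma ract_vec_left:
  "ract (vec j a) g i w =
     (if i = j \<and> length a \<le> length w \<and> take (length a) w = a then g (drop (length a) w) else 0)"
  unfolding ract_def vec_def
  by (subst sum_atLeastAtMost_single[where k="length a"]) (auto dest: take_length_eq)

lemma fmul_cmono_Nil_left: "fmul (cmono c []) g w = c * g w"
  by (simp add: fmul_cmono_left)

lemma ract_cmono_Nil_right: "ract x (cmono c []) i w = x i w * c"
  unfolding ract_def cmono_def
  by (subst sum_atLeastAtMost_single[where k="length w"]) auto

lemma fmul_zero_left: "fmul (\<lambda>_. 0) f = (\<lambda>_. 0)"
  unfolding fmul_def by (auto simp: fun_eq_iff)

lemma fmul_zero_right: "fmul f (\<lambda>_. 0) = (\<lambda>_. 0)"
  unfolding fmul_def by (auto simp: fun_eq_iff)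

lemma ract_zero_right: "ract x (\<lambda>_. 0) = (\<lambda>_ _. 0)"
  unfolding ract_def by (auto simp: fun_eq_iff)

lemma cmono_eq_fmul: "cmono c w = fmul (cmono c []) (mono w)"
  unfolding fun_eq_iff mono_cmono fmul_cmono_left by (auto simp: cmono_def)

lemma cvec_eq_ract: "cvec c j w = ract (vec j w) (cmono c [])"
  unfolding fun_eq_iff ract_vec_left by (auto simp: cvec_def cmono_def vec_def)

lemma vec_append: "vec j (u @ v) = ract (vec j u) (mono v)"
  unfolding fun_eq_iff ract_vec_left by (auto simp: vec_def mono_def) (metis append_take_drop_id)

lemma mono_append: "mono (u @ v) = fmul (mono u) (mono v)"
  unfolding fun_eq_iff mono_cmono fmul_cmono_left by (auto simp: cmono_def) (metis append_take_drop_id)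

lemma mono_inj: "(mono w :: nat list \<Rightarrow> 'k::field) = mono w' \<Longrightarrow> w = w'"
  by (drule fun_cong[of _ _ w]) (auto simp: mono_def split: if_splits)

lemma vec_inj: "(vec j w :: nat \<Rightarrow> nat list \<Rightarrow> 'k::field) = vec j' w' \<Longrightarrow> j = j' \<and> w = w'"
  by (drule fun_cong[of _ _ j], drule fun_cong[of _ _ w]) (auto simp: vec_def split: if_splits)

lemma fmul_nonzero: "fmul f g w \<noteq> 0 \<Longrightarrow> \<exists>u v. w = u @ v \<and> f u \<noteq> 0 \<and> g v \<noteq> 0"
  unfolding fmul_def
  by (erule sum.not_neutral_contains_not_neutral)
    (metis append_take_drop_id mult_zero_left mult_zero_right)

lemma ract_nonzero: "ract x f i w \<noteq> 0 \<Longrightarrow> \<exists>u v. w = u @ v \<and> x i u \<noteq> 0 \<and> f v \<noteq> 0"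
  unfolding ract_def
  by (erule sum.not_neutral_contains_not_neutral)
    (metis append_take_drop_id mult_zero_left mult_zero_right)

lemma isF_zero: "isF n (\<lambda>_. 0)"
  unfolding isF_def by simp

lemma isFree_zero: "isFree n J (\<lambda>_ _. 0)"
  unfolding isFree_def by simp

lemma isF_subset: assumes "isF n f" "\<And>w. g w \<noteq> 0 \<Longrightarrow> f w \<noteq> 0" shows "isF n g"
proof -
  have "{w. g w \<noteq> 0} \<subseteq> {w. f w \<noteq> 0}" using assms(2) by blast
  then show ?thesis using assms unfolding isF_def by (meson finite_subset)
qed

lemma isFree_subset:
  assumes "isFree n J x" "\<And>i w. y i w \<noteq> 0 \<Longrightarrow> x i w \<noteq> 0" shows "isFree n J y"
proof -
  have "{(i, w). y i w \<noteq> 0} \<subseteq> {(i, w). x i w \<noteq> 0}" using assms(2) by blast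
  then show ?thesis using assms unfolding isFree_def by (meson finite_subset)
qed

lemma isF_add:
  assumes "isF n a" "isF n b" shows "isF n (\<lambda>w. a w + b w)"
proof -
  have nz: "a w \<noteq> 0 \<or> b w \<noteq> 0" if "a w + b w \<noteq> 0" for w using that by auto
  then have "{w. a w + b w \<noteq> 0} \<subseteq> {w. a w \<noteq> 0} \<union> {w. b w \<noteq> 0}" by blast
  with assms nz show ?thesis unfolding isF_def by (meson finite_Un finite_subset)
qed

lemma isFree_add:
  assumes "isFree n J x" "isFree n J y" shows "isFree n J (\<lambda>i w. x i w + y i w)"
proof -
  have nz: "x i w \<noteq> 0 \<or> y i w \<noteq> 0" if "x i w + y i w \<noteq> 0" for i w using that by auto
  then have "{(i, w). x i w + y i w \<noteq> 0} \<subseteq> {(i, w). x i w \<noteq> 0} \<union> {(i, w). y i w \<noteq> 0}"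
    by blast
  with assms nz show ?thesis unfolding isFree_def by (meson finite_Un finite_subset)
qed

lemma isFree_sum:
  assumes "finite S" "\<And>j. j \<in> S \<Longrightarrow> isFree n J (h j)"
  shows "isFree n J (\<lambda>i w. \<Sum>j\<in>S. h j i w)"
  using assms by (induction S rule: finite_induct) (auto simp: isFree_zero isFree_add)

lemma isF_fmul:
  assumes "isF n f" "isF n g" shows "isF n (fmul f g)"
proof -
  have "{w. fmul f g w \<noteq> 0} \<subseteq> (\<lambda>(u,v). u @ v) ` ({u. f u \<noteq> 0} \<times> {v. g v \<noteq> 0})"
    by (auto dest!: fmul_nonzero)
  moreover have "finite ((\<lambda>(u,v). u @ v) ` ({u. f u \<noteq> 0} \<times> {v. g v \<noteq> 0}))"
    using assms unfolding isF_def by auto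
  moreover have "set w \<subseteq> {..<n}" if "fmul f g w \<noteq> 0" for w
    using fmul_nonzero[OF that] assms unfolding isF_def by fastforce
  ultimately show ?thesis unfolding isF_def by (auto intro: finite_subset)
qed

lemma isFree_ract:
  assumes "isFree n J x" "isF n g" shows "isFree n J (ract x g)"
proof -
  have "{(i, w). ract x g i w \<noteq> 0} \<subseteq>
      (\<lambda>((i,u),v). (i, u @ v)) ` ({(i, u). x i u \<noteq> 0} \<times> {v. g v \<noteq> 0})"
    by (force dest!: ract_nonzero)
  moreover have "finite ((\<lambda>((i,u),v). (i, u @ v)) ` ({(i, u). x i u \<noteq> 0} \<times> {v. g v \<noteq> 0}))"
    using assms unfolding isF_def isFree_def by auto
  moreover have "i \<in> J \<and> set w \<subseteq> {..<n}" if "ract x g i w \<noteq> 0" for i w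
    using ract_nonzero[OF that] assms unfolding isF_def isFree_def by fastforce
  ultimately show ?thesis unfolding isFree_def by (auto intro: finite_subset)
qed

lemma isF_cmono: "set a \<subseteq> {..<n} \<Longrightarrow> isF n (cmono c a)"
  unfolding isF_def cmono_def by (auto intro: finite_subset[of _ "{a}"])

lemma isF_mono: "set a \<subseteq> {..<n} \<Longrightarrow> isF n (mono a)"
  by (simp add: mono_cmono isF_cmono)

lemma isFree_cvec: "j \<in> J \<Longrightarrow> set a \<subseteq> {..<n} \<Longrightarrow> isFree n J (cvec c j a)"
  unfolding isFree_def cvec_def by (auto intro: finite_subset[of _ "{(j,a)}"])

lemma isFree_vec: "j \<in> J \<Longrightarrow> set a \<subseteq> {..<n} \<Longrightarrow> isFree n J (vec j a)"
  by (simp add: vec_cvec isFree_cvec)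

lemma isFree_component: "isFree n J x \<Longrightarrow> isF n (x j)"
proof -
  assume x: "isFree n J x"
  have "{w. x j w \<noteq> 0} \<subseteq> snd ` {(i, w). x i w \<noteq> 0}" by force
  then show "isF n (x j)" using x unfolding isFree_def isF_def by (auto intro: finite_subset)
qed

lemma F_eq_sum_cmono:
  assumes "finite S" "{w. f w \<noteq> 0} \<subseteq> S"
  shows "f = (\<lambda>u. \<Sum>w\<in>S. cmono (f w) w u)"
proof
  fix u show "f u = (\<Sum>w\<in>S. cmono (f w) w u)"
    using assms by (cases "u \<in> S") (auto simp: cmono_def sum.delta)
qed

lemma free_eq_sum_cvec:
  assumes "finite S" "{(j,w). x j w \<noteq> 0} \<subseteq> S"
  shows "x = (\<lambda>i u. \<Sum>(j, w)\<in>S. cvec (x j w) j w i u)"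
proof (intro ext)
  fix i u
  have "(\<Sum>(j, w)\<in>S. cvec (x j w) j w i u) = (\<Sum>p\<in>S. if p = (i,u) then x i u else 0)"
    by (intro sum.cong) (auto simp: cvec_def split: if_splits)
  then show "x i u = (\<Sum>(j, w)\<in>S. cvec (x j w) j w i u)"
    using assms by (cases "(i,u) \<in> S") (auto simp: sum.delta)
qed

lemma tideal_sum:
  assumes "finite S" "\<And>w. w \<in> S \<Longrightarrow> h w \<in> tideal n G"
  shows "(\<lambda>u. \<Sum>w\<in>S. h w u) \<in> tideal n G"
  using assms by (induction S rule: finite_induct) (auto intro: tideal.zero tideal.add)

lemma rsub_sum:
  assumes "finite S" "\<And>w. w \<in> S \<Longrightarrow> h w \<in> rsub n G"
  shows "(\<lambda>i u. \<Sum>w\<in>S. h w i u) \<in> rsub n G"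
  using assms by (induction S rule: finite_induct) (auto intro: rsub.zero rsub.add)

lemma rsub_mono: "x \<in> rsub n A \<Longrightarrow> A \<subseteq> B \<Longrightarrow> x \<in> rsub n B"
  by (induction x rule: rsub.induct) (auto intro: rsub.intros)

lemma tideal_mono: "x \<in> tideal n A \<Longrightarrow> A \<subseteq> B \<Longrightarrow> x \<in> tideal n B"
  by (induction x rule: tideal.induct) (auto intro: tideal.intros)

lemma rsub_scale: "x \<in> rsub n S \<Longrightarrow> ract x (cmono c []) \<in> rsub n S"
  by (erule rsub.rmul) (simp add: isF_cmono)

lemma tideal_scale: "f \<in> tideal n S \<Longrightarrow> fmul (cmono c []) f \<in> tideal n S"
  by (erule tideal.lmul) (simp add: isF_cmono)

section \<open>Monomial ideals\<close>

definition ideal_words :: "nat list set \<Rightarrow> nat list set" where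
  "ideal_words G = {a @ t @ c | a t c. t \<in> G}"

definition F_on :: "nat \<Rightarrow> nat list set \<Rightarrow> (nat list \<Rightarrow> 'k::field) set" where
  "F_on n W = {f. isF n f \<and> (\<forall>w. f w \<noteq> 0 \<longrightarrow> w \<in> W)}"

lemma ideal_words_append:
  assumes "w \<in> ideal_words G" shows "u @ w @ v \<in> ideal_words G"
proof -
  from assms obtain a t c where "t \<in> G" "w = a @ t @ c" unfolding ideal_words_def by blast
  then show ?thesis unfolding ideal_words_def
    by (intro CollectI exI[of _ "u @ a"] exI[of _ t] exI[of _ "c @ v"]) simp
qed

lemma ideal_words_append_right: "w \<in> ideal_words G \<Longrightarrow> w @ v \<in> ideal_words G"
  using ideal_words_append[of w G "[]" v] by simp

lemma ideal_words_append_left: "w \<in> ideal_words G \<Longrightarrow> u @ w \<in> ideal_words G"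
  using ideal_words_append[of w G u "[]"] by simp

lemma generator_in_ideal_words: "t \<in> G \<Longrightarrow> t \<in> ideal_words G"
  unfolding ideal_words_def by (intro CollectI exI[of _ "[]"] exI[of _ t]) simp

lemma mono_factor_in_tideal:
  assumes "mono t \<in> tideal n T" "set a \<subseteq> {..<n}" "set c \<subseteq> {..<n}"
  shows "mono (a @ t @ c) \<in> tideal n T"
proof -
  have "fmul (mono a) (mono t) \<in> tideal n T"
    by (rule tideal.lmul) (use assms in \<open>auto intro: isF_mono\<close>)
  then have "fmul (fmul (mono a) (mono t)) (mono c) \<in> tideal n T"
    by (rule tideal.rmul) (use assms in \<open>auto intro: isF_mono\<close>)
  then show ?thesis by (simp only: append_assoc[symmetric] mono_append)
qed

lemma mono_in_tideal:
  assumes "w \<in> ideal_words G" "set w \<subseteq> {..<n}"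
  shows "mono w \<in> tideal n (mono ` G)"
proof -
  obtain a t c where w: "t \<in> G" "w = a @ t @ c" using assms(1) unfolding ideal_words_def by blast
  then show ?thesis using assms(2) by (auto intro: mono_factor_in_tideal tideal.gen)
qed

lemma tideal_subset_F_on:
  assumes G: "\<forall>g\<in>G. set g \<subseteq> {..<n}" and y: "y \<in> tideal n (mono ` G)"
  shows "y \<in> F_on n (ideal_words G)"
  using y
proof (induction y rule: tideal.induct)
  case (gen a)
  then obtain g where g: "g \<in> G" "a = mono g" by auto
  have "isF n (mono g)" using G g by (simp add: isF_mono)
  then show ?case using g generator_in_ideal_words[OF g(1)] by (simp add: F_on_def mono_def)
next
  case zero then show ?case by (simp add: F_on_def isF_zero)
next
  case (add a b)
  have "w \<in> ideal_words G" if "a w + b w \<noteq> 0" for w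
    using that add.IH unfolding F_on_def by (cases "a w = 0") auto
  then show ?case using add.IH isF_add unfolding F_on_def by blast
next
  case (lmul a f)
  have "w \<in> ideal_words G" if "fmul f a w \<noteq> 0" for w
    using fmul_nonzero[OF that] lmul.IH ideal_words_append_left unfolding F_on_def by blast
  then show ?case using lmul isF_fmul unfolding F_on_def by blast
next
  case (rmul a f)
  have "w \<in> ideal_words G" if "fmul a f w \<noteq> 0" for w
    using fmul_nonzero[OF that] rmul.IH ideal_words_append_right unfolding F_on_def by blast
  then show ?case using rmul isF_fmul unfolding F_on_def by blast
qed

lemma tideal_monomial_eq:
  assumes G: "\<forall>g\<in>G. set g \<subseteq> {..<n}"
  shows "tideal n (mono ` G) = F_on n (ideal_words G)"
proof
  show "tideal n (mono ` G) \<subseteq> F_on n (ideal_words G)" using tideal_subset_F_on[OF G] by blast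
next
  show "F_on n (ideal_words G) \<subseteq> tideal n (mono ` G)"
  proof
    fix f assume f: "f \<in> F_on n (ideal_words G)"
    then have fin: "finite {w. f w \<noteq> 0}" unfolding F_on_def isF_def by auto
    have "cmono (f w) w \<in> tideal n (mono ` G)" if "f w \<noteq> 0" for w
    proof -
      have "w \<in> ideal_words G" "set w \<subseteq> {..<n}" using f that unfolding F_on_def isF_def by auto
      then show ?thesis unfolding cmono_eq_fmul[of "f w" w] by (intro tideal_scale mono_in_tideal)
    qed
    then have "(\<lambda>u. \<Sum>w\<in>{w. f w \<noteq> 0}. cmono (f w) w u) \<in> tideal n (mono ` G)"
      using fin by (intro tideal_sum) auto
    then show "f \<in> tideal n (mono ` G)" using F_eq_sum_cmono[OF fin, of f] by simp
  qed
qed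

definition min_words :: "nat list set \<Rightarrow> nat list set" where
  "min_words G = {t \<in> ideal_words G.
     \<forall>a u c. t = a @ u @ c \<longrightarrow> (a \<noteq> [] \<or> c \<noteq> []) \<longrightarrow> u \<notin> ideal_words G}"

lemma min_words_subset: "min_words G \<subseteq> G"
proof
  fix t assume t: "t \<in> min_words G"
  then obtain a g c where g: "g \<in> G" "t = a @ g @ c" unfolding min_words_def ideal_words_def by auto
  then have "a = [] \<and> c = []"
    using t generator_in_ideal_words[OF g(1)] unfolding min_words_def by blast
  then show "t \<in> G" using g by simp
qed

lemma min_words_ideal_words: "min_words G \<subseteq> ideal_words G"
  unfolding min_words_def by auto

lemma min_word_factor: "w \<in> ideal_words G \<Longrightarrow> \<exists>a t c. t \<in> min_words G \<and> w = a @ t @ c"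
proof (induction w rule: length_induct)
  case (1 w)
  show ?case
  proof (cases "w \<in> min_words G")
    case True then show ?thesis by (intro exI[of _ "[]"] exI[of _ w]) simp
  next
    case False
    then obtain a u c where auc: "w = a @ u @ c" "a \<noteq> [] \<or> c \<noteq> []" "u \<in> ideal_words G"
      using "1.prems" unfolding min_words_def by auto
    then have "length u < length w" by auto
    then obtain a' t c' where "t \<in> min_words G" "u = a' @ t @ c'" using "1.IH" auc(3) by blast
    then show ?thesis using auc by (intro exI[of _ "a @ a'"] exI[of _ t] exI[of _ "c' @ c"]) simp
  qed
qed

lemma ideal_words_min_words: "ideal_words (min_words G) = ideal_words G"
proof
  show "ideal_words (min_words G) \<subseteq> ideal_words G"
    using min_words_subset unfolding ideal_words_def by blast
  show "ideal_words G \<subseteq> ideal_words (min_words G)"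
    using min_word_factor unfolding ideal_words_def by blast
qed

lemma homogF_mono: "homogF (int (length w)) (mono w)"
  unfolding homogF_def mono_def by auto

lemma minbasis_ideal_min_words:
  assumes G: "\<forall>g\<in>G. set g \<subseteq> {..<n}"
  shows "minbasis_ideal n (tideal n (mono ` G)) (mono ` min_words G :: (nat list \<Rightarrow> 'k::field) set)"
proof -
  have G': "\<forall>g\<in>min_words G. set g \<subseteq> {..<n}" using G min_words_subset by blast
  have same_ideal: "tideal n (mono ` G) = (tideal n (mono ` min_words G) :: (nat list \<Rightarrow> 'k) set)"
    unfolding tideal_monomial_eq[OF G] tideal_monomial_eq[OF G'] ideal_words_min_words ..
  have irredundant: "b \<notin> tideal n (mono ` min_words G - {b})"
    if b: "b \<in> (mono ` min_words G :: (nat list \<Rightarrow> 'k) set)" for b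
  proof
    obtain t where t: "t \<in> min_words G" "b = mono t" using b by auto
    have "(mono ` min_words G - {b} :: (nat list \<Rightarrow> 'k) set) = mono ` (min_words G - {t})"
      using t mono_inj by fastforce
    moreover assume "b \<in> tideal n (mono ` min_words G - {b})"
    moreover have "tideal n (mono ` (min_words G - {t})) =
        (F_on n (ideal_words (min_words G - {t})) :: (nat list \<Rightarrow> 'k) set)"
      using G' by (intro tideal_monomial_eq) blast
    ultimately have "b \<in> F_on n (ideal_words (min_words G - {t}))" by simp
    moreover have "b t \<noteq> 0" using t by (simp add: mono_def)
    ultimately have "t \<in> ideal_words (min_words G - {t})" unfolding F_on_def by blast
    then obtain a t' c where tc: "t' \<in> min_words G" "t' \<noteq> t" "t = a @ t' @ c"
      unfolding ideal_words_def by blast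
    then have "a \<noteq> [] \<or> c \<noteq> []" by auto
    then have "t' \<notin> ideal_words G" using t tc unfolding min_words_def by blast
    then show False using tc min_words_ideal_words by blast
  qed
  have "\<forall>b\<in>(mono ` min_words G :: (nat list \<Rightarrow> 'k) set). \<exists>e. homogF e b"
    using homogF_mono by blast
  then show ?thesis unfolding minbasis_ideal_def
    using G' same_ideal irredundant by (blast intro: isF_mono)
qed

section \<open>Monomial submodules\<close>

text \<open>A monomial submodule (containing \<open>Ipart\<close>) is the set of vectors supported on a set of
  positions \<open>(j, w)\<close>, standing for the monomials \<open>e\<^sub>j w\<close>.\<close>
definition Free_on :: "nat \<Rightarrow> nat set \<Rightarrow> (nat \<times> nat list) set \<Rightarrow> (nat \<Rightarrow> nat list \<Rightarrow> 'k::field) set" where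
  "Free_on n J U = {x. isFree n J x \<and> (\<forall>j w. x j w \<noteq> 0 \<longrightarrow> (j, w) \<in> U)}"

definition vecs :: "(nat \<times> nat list) set \<Rightarrow> (nat \<Rightarrow> nat list \<Rightarrow> 'k::field) set" where
  "vecs S = (\<lambda>(j, w). vec j w) ` S"

definition mono_closure :: "nat \<Rightarrow> nat set \<Rightarrow> nat list set \<Rightarrow> (nat \<times> nat list) set \<Rightarrow> (nat \<times> nat list) set" where
  "mono_closure n J G S = {(i, y). i \<in> J \<and> set y \<subseteq> {..<n} \<and>
     (y \<in> ideal_words G \<or> (\<exists>u v. (i, u) \<in> S \<and> y = u @ v))}"

definition min_positions :: "nat list set \<Rightarrow> (nat \<times> nat list) set \<Rightarrow> (nat \<times> nat list) set" where
  "min_positions G U = {p \<in> U. snd p \<notin> ideal_words G \<and>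
     (\<forall>u v. snd p = u @ v \<longrightarrow> v \<noteq> [] \<longrightarrow> (fst p, u) \<notin> U)}"

lemma mono_closure_positions: "mono_closure n J G S \<subseteq> {(j, w). j \<in> J \<and> set w \<subseteq> {..<n}}"
  unfolding mono_closure_def by auto

lemma mono_closure_append:
  assumes "(i, u) \<in> mono_closure n J G S" "set v \<subseteq> {..<n}"
  shows "(i, u @ v) \<in> mono_closure n J G S"
proof -
  have "i \<in> J" "set u \<subseteq> {..<n}" using assms(1) unfolding mono_closure_def by auto
  moreover have "u @ v \<in> ideal_words G \<or> (\<exists>u' v'. (i, u') \<in> S \<and> u @ v = u' @ v')"
    using assms(1) unfolding mono_closure_def by (auto intro: ideal_words_append_right)
  ultimately show ?thesis using assms(2) unfolding mono_closure_def by auto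
qed

lemma mono_closure_subset:
  assumes "S' \<subseteq> mono_closure n J G S" shows "mono_closure n J G S' \<subseteq> mono_closure n J G S"
proof
  fix p assume p: "p \<in> mono_closure n J G S'"
  obtain i y where py: "p = (i, y)" by (cases p)
  have iy: "i \<in> J" "set y \<subseteq> {..<n}" using p py unfolding mono_closure_def by auto
  show "p \<in> mono_closure n J G S"
  proof (cases "y \<in> ideal_words G")
    case True then show ?thesis using iy py unfolding mono_closure_def by auto
  next
    case False
    then obtain u v where "(i, u) \<in> S'" "y = u @ v" using p py unfolding mono_closure_def by auto
    then show ?thesis using mono_closure_append[of i u n J G S v] assms iy py by auto
  qed
qed

lemma subset_mono_closure:
  "S \<subseteq> {(j, w). j \<in> J \<and> set w \<subseteq> {..<n}} \<Longrightarrow> S \<subseteq> mono_closure n J G S"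
  unfolding mono_closure_def by force

lemma mono_closure_idem: "mono_closure n J G (mono_closure n J G S) = mono_closure n J G S"
  using mono_closure_subset[of "mono_closure n J G S" n J G S]
    subset_mono_closure[OF mono_closure_positions] by blast

lemma vec_in_Ipart:
  assumes G: "\<forall>g\<in>G. set g \<subseteq> {..<n}" and "j \<in> J" "set w \<subseteq> {..<n}" "w \<in> ideal_words G"
  shows "(vec j w :: nat \<Rightarrow> nat list \<Rightarrow> 'k::field) \<in> Ipart n J (tideal n (mono ` G))"
proof -
  have "(vec j w i :: nat list \<Rightarrow> 'k) \<in> tideal n (mono ` G)" for i
  proof (cases "i = j")
    case True
    then have "(vec j w i :: nat list \<Rightarrow> 'k) = mono w" by (auto simp: vec_def mono_def)
    then show ?thesis using mono_in_tideal[OF assms(4,3)] by simp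
  next
    case False
    then have "(vec j w i :: nat list \<Rightarrow> 'k) = (\<lambda>_. 0)" by (auto simp: vec_def)
    then show ?thesis by (simp add: tideal.zero)
  qed
  then show ?thesis unfolding Ipart_def using assms isFree_vec by auto
qed

lemma Ipart_monomial_eq:
  assumes G: "\<forall>g\<in>G. set g \<subseteq> {..<n}"
  shows "Ipart n J (tideal n (mono ` G)) =
    {x. isFree n J x \<and> (\<forall>j w. x j w \<noteq> 0 \<longrightarrow> w \<in> ideal_words G)}"
proof -
  have "x \<in> Ipart n J (tideal n (mono ` G)) \<longleftrightarrow>
      isFree n J x \<and> (\<forall>j w. x j w \<noteq> 0 \<longrightarrow> w \<in> ideal_words G)" for x :: "nat \<Rightarrow> nat list \<Rightarrow> 'k::field"
    unfolding Ipart_def tideal_monomial_eq[OF G] F_on_def using isFree_component by blast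
  then show ?thesis by blast
qed

lemma Ipart_subset_Free_on:
  assumes G: "\<forall>g\<in>G. set g \<subseteq> {..<n}"
  shows "Ipart n J (tideal n (mono ` G)) \<subseteq> Free_on n J (mono_closure n J G S)"
  unfolding Ipart_monomial_eq[OF G] Free_on_def mono_closure_def isFree_def by auto

lemma rsub_subset_Free_on:
  assumes G: "\<forall>g\<in>G. set g \<subseteq> {..<n}"
    and S: "S \<subseteq> {(j, w). j \<in> J \<and> set w \<subseteq> {..<n}}"
    and y: "y \<in> rsub n (vecs S \<union> Ipart n J (tideal n (mono ` G)))"
  shows "y \<in> Free_on n J (mono_closure n J G S)"
  using y
proof (induction y rule: rsub.induct)
  case (gen x)
  then show ?case
  proof
    assume "x \<in> vecs S"
    then obtain j w where jw: "(j, w) \<in> S" "x = vec j w" unfolding vecs_def by auto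
    then have "isFree n J x" using S by (auto simp: isFree_vec)
    moreover have "(j, w) \<in> mono_closure n J G S" using subset_mono_closure[OF S] jw by auto
    ultimately show ?thesis using jw unfolding Free_on_def by (auto simp: vec_def)
  next
    assume "x \<in> Ipart n J (tideal n (mono ` G))"
    then show ?thesis using Ipart_subset_Free_on[OF G] by blast
  qed
next
  case zero then show ?case by (simp add: Free_on_def isFree_zero)
next
  case (add x y)
  have "(j, w) \<in> mono_closure n J G S" if "x j w + y j w \<noteq> 0" for j w
    using that add.IH unfolding Free_on_def by (cases "x j w = 0") auto
  then show ?case using add.IH isFree_add unfolding Free_on_def by blast
next
  case (rmul x f)
  have "(j, w) \<in> mono_closure n J G S" if nz: "ract x f j w \<noteq> 0" for j w
  proof -
    obtain u v where uv: "w = u @ v" "x j u \<noteq> 0" "f v \<noteq> 0" using ract_nonzero[OF nz] by blast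
    then have "(j, u) \<in> mono_closure n J G S" using rmul.IH unfolding Free_on_def by blast
    moreover have "set v \<subseteq> {..<n}" using rmul.hyps uv unfolding isF_def by auto
    ultimately show ?thesis using mono_closure_append uv by blast
  qed
  then show ?case using rmul isFree_ract unfolding Free_on_def by blast
qed

lemma vec_in_rsub_vecs:
  assumes G: "\<forall>g\<in>G. set g \<subseteq> {..<n}" and jw: "(j, w) \<in> mono_closure n J G S"
  shows "vec j w \<in> rsub n (vecs S \<union> Ipart n J (tideal n (mono ` G)))"
proof -
  have jw': "j \<in> J" "set w \<subseteq> {..<n}" using jw unfolding mono_closure_def by auto
  show ?thesis
  proof (cases "w \<in> ideal_words G")
    case True
    then show ?thesis using vec_in_Ipart[OF G jw'] by (auto intro: rsub.gen)
  next
    case False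
    then obtain u v where uv: "(j, u) \<in> S" "w = u @ v" using jw unfolding mono_closure_def by auto
    have "vec j u \<in> rsub n (vecs S \<union> Ipart n J (tideal n (mono ` G)))"
      using uv(1) by (force intro: rsub.gen simp: vecs_def)
    then have "ract (vec j u) (mono v) \<in> rsub n (vecs S \<union> Ipart n J (tideal n (mono ` G)))"
      by (rule rsub.rmul) (use jw' uv in \<open>auto intro: isF_mono\<close>)
    then show ?thesis using uv by (simp add: vec_append)
  qed
qed

lemma Free_on_subset_rsub:
  assumes G: "\<forall>g\<in>G. set g \<subseteq> {..<n}"
    and x: "x \<in> Free_on n J (mono_closure n J G S)"
  shows "x \<in> rsub n (vecs S \<union> Ipart n J (tideal n (mono ` G)))"
proof -
  have fin: "finite {(j, w). x j w \<noteq> 0}" using x unfolding Free_on_def isFree_def by auto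
  have "cvec (x j w) j w \<in> rsub n (vecs S \<union> Ipart n J (tideal n (mono ` G)))"
    if "x j w \<noteq> 0" for j w
    using that x vec_in_rsub_vecs[OF G] rsub_scale unfolding cvec_eq_ract Free_on_def by blast
  then have "(\<lambda>i u. \<Sum>(j, w)\<in>{(j, w). x j w \<noteq> 0}. cvec (x j w) j w i u)
      \<in> rsub n (vecs S \<union> Ipart n J (tideal n (mono ` G)))"
    using fin by (intro rsub_sum) auto
  then show ?thesis by (subst free_eq_sum_cvec[OF fin order_refl])
qed

lemma rsub_vecs_eq_Free_on:
  assumes G: "\<forall>g\<in>G. set g \<subseteq> {..<n}"
    and S: "S \<subseteq> {(j, w). j \<in> J \<and> set w \<subseteq> {..<n}}"
  shows "rsub n (vecs S \<union> Ipart n J (tideal n (mono ` G))) = Free_on n J (mono_closure n J G S)"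
  using rsub_subset_Free_on[OF G S] Free_on_subset_rsub[OF G, of _ J S] by (intro equalityI subsetI)

lemma min_positions_subset: "min_positions G U \<subseteq> U"
  unfolding min_positions_def by auto

lemma min_positions_minimal:
  "(j, w) \<in> min_positions G U \<Longrightarrow> w = u @ v \<Longrightarrow> v \<noteq> [] \<Longrightarrow> (j, u) \<notin> U"
  unfolding min_positions_def by auto

lemma min_position_prefix:
  assumes "(j, w) \<in> mono_closure n J G S"
  shows "w \<in> ideal_words G \<or> (\<exists>u v. (j, u) \<in> min_positions G (mono_closure n J G S) \<and> w = u @ v)"
  using assms
proof (induction w rule: length_induct)
  case (1 w)
  let ?U = "mono_closure n J G S"
  show ?case
  proof (cases "w \<in> ideal_words G")
    case True then show ?thesis by blast
  next
    case notIW: False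
    show ?thesis
    proof (cases "(j, w) \<in> min_positions G ?U")
      case True then show ?thesis by (intro disjI2 exI[of _ w] exI[of _ "[]"]) simp
    next
      case False
      then obtain u v where uv: "w = u @ v" "v \<noteq> []" "(j, u) \<in> ?U"
        using notIW "1.prems" unfolding min_positions_def by auto
      then have "u \<in> ideal_words G \<or> (\<exists>u' v'. (j, u') \<in> min_positions G ?U \<and> u = u' @ v')"
        using "1.IH" by simp
      then show ?thesis
      proof
        assume "u \<in> ideal_words G" then show ?thesis using uv ideal_words_append_right by blast
      next
        assume "\<exists>u' v'. (j, u') \<in> min_positions G ?U \<and> u = u' @ v'"
        then obtain u' v' where "(j, u') \<in> min_positions G ?U" "u = u' @ v'" by blast
        then show ?thesis using uv by (intro disjI2 exI[of _ u'] exI[of _ "v' @ v"]) simp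
      qed
    qed
  qed
qed

lemma mono_closure_min_positions:
  "mono_closure n J G (min_positions G (mono_closure n J G S)) = mono_closure n J G S"
proof
  show "mono_closure n J G (min_positions G (mono_closure n J G S)) \<subseteq> mono_closure n J G S"
    by (rule mono_closure_subset[OF min_positions_subset])
  show "mono_closure n J G S \<subseteq> mono_closure n J G (min_positions G (mono_closure n J G S))"
  proof
    fix p assume p: "p \<in> mono_closure n J G S"
    obtain i y where py: "p = (i, y)" by (cases p)
    have "i \<in> J" "set y \<subseteq> {..<n}" using p py unfolding mono_closure_def by auto
    then show "p \<in> mono_closure n J G (min_positions G (mono_closure n J G S))"
      using min_position_prefix[of i y n J G S] p py
      unfolding mono_closure_def[of n J G "min_positions G (mono_closure n J G S)"] by auto
  qed
qed

lemma homog_vec: "homog D (D j + int (length w)) (vec j w)"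
  unfolding homog_def vec_def by auto

lemma inj_vec_pair: "inj (\<lambda>(j, w). vec j w :: nat \<Rightarrow> nat list \<Rightarrow> 'k::field)"
  by (rule injI) (auto dest: vec_inj)

lemma minbasis_min_positions:
  assumes G: "\<forall>g\<in>G. set g \<subseteq> {..<n}"
    and S: "S \<subseteq> {(j, w). j \<in> J \<and> set w \<subseteq> {..<n}}"
  shows "minbasis n J D (tideal n (mono ` G)) (Free_on n J (mono_closure n J G S))
           (vecs (min_positions G (mono_closure n J G S)) :: (nat \<Rightarrow> nat list \<Rightarrow> 'k::field) set)"
proof -
  let ?U = "mono_closure n J G S" let ?M = "min_positions G ?U"
  let ?P = "Ipart n J (tideal n (mono ` G)) :: (nat \<Rightarrow> nat list \<Rightarrow> 'k) set"
  have MR: "?M \<subseteq> {(j, w). j \<in> J \<and> set w \<subseteq> {..<n}}"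
    using min_positions_subset mono_closure_positions by blast
  have free: "\<forall>b\<in>(vecs ?M :: (nat \<Rightarrow> nat list \<Rightarrow> 'k) set). isFree n J b \<and> (\<exists>e. homog D e b)"
  proof
    fix b :: "nat \<Rightarrow> nat list \<Rightarrow> 'k" assume "b \<in> vecs ?M"
    then obtain j w where "(j, w) \<in> ?M" "b = vec j w" unfolding vecs_def by auto
    then show "isFree n J b \<and> (\<exists>e. homog D e b)" using MR homog_vec by (blast intro: isFree_vec)
  qed
  have generates: "rsub n (vecs ?M \<union> ?P) = Free_on n J ?U"
    using rsub_vecs_eq_Free_on[OF G MR] by (simp add: mono_closure_min_positions)
  have irredundant: "b \<notin> rsub n ((vecs ?M - {b}) \<union> ?P)" if b: "b \<in> vecs ?M" for b
  proof
    obtain j w where jw: "(j, w) \<in> ?M" "b = vec j w" using b unfolding vecs_def by auto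
    have "vecs ?M - {b} = (vecs (?M - {(j, w)}) :: (nat \<Rightarrow> nat list \<Rightarrow> 'k) set)"
      unfolding vecs_def image_set_diff[OF inj_vec_pair] using jw by simp
    moreover assume "b \<in> rsub n ((vecs ?M - {b}) \<union> ?P)"
    moreover have "rsub n (vecs (?M - {(j, w)}) \<union> ?P) = Free_on n J (mono_closure n J G (?M - {(j, w)}))"
      by (rule rsub_vecs_eq_Free_on[OF G]) (use MR in blast)
    ultimately have "b \<in> Free_on n J (mono_closure n J G (?M - {(j, w)}))" by simp
    moreover have "b j w \<noteq> 0" using jw by (simp add: vec_def)
    ultimately have "(j, w) \<in> mono_closure n J G (?M - {(j, w)})" unfolding Free_on_def by blast
    then obtain u v where uv: "(j, u) \<in> ?M" "u \<noteq> w" "w = u @ v"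
      using jw unfolding mono_closure_def min_positions_def by auto
    then have "(j, u) \<notin> ?U" using min_positions_minimal[OF jw(1) uv(3)] by auto
    then show False using uv(1) min_positions_subset by blast
  qed
  show ?thesis unfolding minbasis_def using free generates[symmetric] irredundant by blast
qed

section \<open>Homogeneous components\<close>

definition hcompF :: "int \<Rightarrow> (nat list \<Rightarrow> 'k::field) \<Rightarrow> nat list \<Rightarrow> 'k" where
  "hcompF e f = (\<lambda>w. if int (length w) = e then f w else 0)"

definition hcomp :: "(nat \<Rightarrow> int) \<Rightarrow> int \<Rightarrow> (nat \<Rightarrow> nat list \<Rightarrow> 'k::field) \<Rightarrow> nat \<Rightarrow> nat list \<Rightarrow> 'k" where
  "hcomp D e x = (\<lambda>i w. if D i + int (length w) = e then x i w else 0)"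

lemma hcomp_ract:
  fixes x :: "nat \<Rightarrow> nat list \<Rightarrow> 'k::field"
  assumes E: "finite E" "\<forall>i u. x i u \<noteq> 0 \<longrightarrow> D i + int (length u) \<in> E"
  shows "hcomp D e (ract x f) = (\<lambda>i w. \<Sum>e'\<in>E. ract (hcomp D e' x) (hcompF (e - e') f) i w)"
proof (intro ext)
  fix i w
  define T where "T m = (if D i + int (length w) = e then x i (take m w) * f (drop m w) else 0)" for m
  have step: "ract (hcomp D e' x) (hcompF (e - e') f) i w
      = (\<Sum>m\<in>{0..length w}. if e' = D i + int m then T m else 0)" for e'
    unfolding ract_def hcomp_def hcompF_def T_def
    by (intro sum.cong refl) (auto simp: min_def of_nat_diff)
  have "(\<Sum>e'\<in>E. ract (hcomp D e' x) (hcompF (e - e') f) i w)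
      = (\<Sum>e'\<in>E. \<Sum>m\<in>{0..length w}. if e' = D i + int m then T m else 0)"
    by (simp add: step)
  also have "\<dots> = (\<Sum>m\<in>{0..length w}. \<Sum>e'\<in>E. if e' = D i + int m then T m else 0)"
    by (rule sum.swap)
  also have "\<dots> = (\<Sum>m\<in>{0..length w}. if D i + int m \<in> E then T m else 0)"
    using E(1) by simp
  also have "\<dots> = (\<Sum>m\<in>{0..length w}. T m)"
  proof (intro sum.cong refl)
    fix m assume m: "m \<in> {0..length w}"
    show "(if D i + int m \<in> E then T m else 0) = T m"
    proof (cases "D i + int m \<in> E")
      case False
      then have "x i (take m w) = 0" using E(2) m by (metis atLeastAtMost_iff length_take min.absorb2)
      then show ?thesis by (simp add: T_def)
    qed simp
  qed
  also have "\<dots> = hcomp D e (ract x f) i w"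
    unfolding T_def hcomp_def ract_def by (cases "D i + int (length w) = e") simp_all
  finally show "hcomp D e (ract x f) i w = (\<Sum>e'\<in>E. ract (hcomp D e' x) (hcompF (e - e') f) i w)" by simp
qed

lemma hcompF_fmul_right_degrees:
  fixes a :: "nat list \<Rightarrow> 'k::field"
  assumes E: "finite E" "\<forall>v. a v \<noteq> 0 \<longrightarrow> int (length v) \<in> E"
  shows "hcompF e (fmul f a) = (\<lambda>w. \<Sum>e'\<in>E. fmul (hcompF (e - e') f) (hcompF e' a) w)"
proof (intro ext)
  fix w
  define T where "T m = (if int (length w) = e then f (take m w) * a (drop m w) else 0)" for m
  have step: "fmul (hcompF (e - e') f) (hcompF e' a) w
      = (\<Sum>m\<in>{0..length w}. if e' = int (length w - m) then T m else 0)" for e'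
    unfolding fmul_def hcompF_def T_def
    by (intro sum.cong refl) (auto simp: min_def of_nat_diff)
  have "(\<Sum>e'\<in>E. fmul (hcompF (e - e') f) (hcompF e' a) w)
      = (\<Sum>e'\<in>E. \<Sum>m\<in>{0..length w}. if e' = int (length w - m) then T m else 0)"
    by (simp add: step)
  also have "\<dots> = (\<Sum>m\<in>{0..length w}. \<Sum>e'\<in>E. if e' = int (length w - m) then T m else 0)"
    by (rule sum.swap)
  also have "\<dots> = (\<Sum>m\<in>{0..length w}. if int (length w - m) \<in> E then T m else 0)"
    using E(1) by simp
  also have "\<dots> = (\<Sum>m\<in>{0..length w}. T m)"
  proof (intro sum.cong refl)
    fix m assume m: "m \<in> {0..length w}"
    show "(if int (length w - m) \<in> E then T m else 0) = T m"
    proof (cases "int (length w - m) \<in> E")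
      case False
      then have "a (drop m w) = 0" using E(2) by (metis length_drop)
      then show ?thesis by (simp add: T_def)
    qed simp
  qed
  also have "\<dots> = hcompF e (fmul f a) w"
    unfolding T_def hcompF_def fmul_def by (cases "int (length w) = e") simp_all
  finally show "hcompF e (fmul f a) w = (\<Sum>e'\<in>E. fmul (hcompF (e - e') f) (hcompF e' a) w)" by simp
qed

lemma hcompF_fmul_left_degrees:
  fixes a :: "nat list \<Rightarrow> 'k::field"
  assumes E: "finite E" "\<forall>v. a v \<noteq> 0 \<longrightarrow> int (length v) \<in> E"
  shows "hcompF e (fmul a f) = (\<lambda>w. \<Sum>e'\<in>E. fmul (hcompF e' a) (hcompF (e - e') f) w)"
proof (intro ext)
  fix w
  define T where "T m = (if int (length w) = e then a (take m w) * f (drop m w) else 0)" for m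
  have step: "fmul (hcompF e' a) (hcompF (e - e') f) w
      = (\<Sum>m\<in>{0..length w}. if e' = int m then T m else 0)" for e'
    unfolding fmul_def hcompF_def T_def
    by (intro sum.cong refl) (auto simp: min_def of_nat_diff)
  have "(\<Sum>e'\<in>E. fmul (hcompF e' a) (hcompF (e - e') f) w)
      = (\<Sum>e'\<in>E. \<Sum>m\<in>{0..length w}. if e' = int m then T m else 0)"
    by (simp add: step)
  also have "\<dots> = (\<Sum>m\<in>{0..length w}. \<Sum>e'\<in>E. if e' = int m then T m else 0)"
    by (rule sum.swap)
  also have "\<dots> = (\<Sum>m\<in>{0..length w}. if int m \<in> E then T m else 0)"
    using E(1) by simp
  also have "\<dots> = (\<Sum>m\<in>{0..length w}. T m)"
  proof (intro sum.cong refl)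
    fix m assume m: "m \<in> {0..length w}"
    show "(if int m \<in> E then T m else 0) = T m"
    proof (cases "int m \<in> E")
      case False
      then have "a (take m w) = 0" using E(2) m by (metis atLeastAtMost_iff length_take min.absorb2)
      then show ?thesis by (simp add: T_def)
    qed simp
  qed
  also have "\<dots> = hcompF e (fmul a f) w"
    unfolding T_def hcompF_def fmul_def by (cases "int (length w) = e") simp_all
  finally show "hcompF e (fmul a f) w = (\<Sum>e'\<in>E. fmul (hcompF e' a) (hcompF (e - e') f) w)" by simp
qed

lemma hcomp_homog:
  assumes "homog D e0 t"
  shows "hcomp D e t = (if e = e0 then t else (\<lambda>_ _. 0))"
  using assms unfolding homog_def hcomp_def by (auto simp: fun_eq_iff)

lemma hcompF_homogF:
  assumes "homogF e0 t"
  shows "hcompF e t = (if e = e0 then t else (\<lambda>_. 0))"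
  using assms unfolding homogF_def hcompF_def by (auto simp: fun_eq_iff)

lemma isF_hcompF: "isF n f \<Longrightarrow> isF n (hcompF e f)"
  by (erule isF_subset) (auto simp: hcompF_def split: if_splits)

lemma isFree_hcomp: "isFree n J f \<Longrightarrow> isFree n J (hcomp D e f)"
  by (erule isFree_subset) (auto simp: hcomp_def split: if_splits)

lemma hcompF_negative: "e < 0 \<Longrightarrow> hcompF e f = (\<lambda>_. 0)"
  unfolding hcompF_def by auto

lemma finite_degrees_free:
  assumes "isFree n J x"
  shows "finite ((\<lambda>(i, u). D i + int (length u)) ` {(i, u). x i u \<noteq> 0})"
  using assms unfolding isFree_def by auto

lemma finite_degrees_F:
  assumes "isF n x"
  shows "finite ((\<lambda>u. int (length u)) ` {u. x u \<noteq> 0})"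
  using assms unfolding isF_def by auto

definition homog_upto :: "(nat \<Rightarrow> int) \<Rightarrow> int \<Rightarrow> (nat \<Rightarrow> nat list \<Rightarrow> 'k::field) set
    \<Rightarrow> (nat \<Rightarrow> nat list \<Rightarrow> 'k) set" where
  "homog_upto D e T = {t\<in>T. \<exists>e'\<le>e. homog D e' t}"

definition homogF_upto :: "int \<Rightarrow> (nat list \<Rightarrow> 'k::field) set \<Rightarrow> (nat list \<Rightarrow> 'k) set" where
  "homogF_upto e T = {t\<in>T. \<exists>e'\<le>e. homogF e' t}"

lemma homog_upto_mono: "e' \<le> e \<Longrightarrow> homog_upto D e' T \<subseteq> homog_upto D e T"
  unfolding homog_upto_def by (auto intro: order.trans)

lemma homogF_upto_mono: "e' \<le> e \<Longrightarrow> homogF_upto e' T \<subseteq> homogF_upto e T"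
  unfolding homogF_upto_def by (auto intro: order.trans)

lemma hcomp_ract_in_rsub_upto:
  assumes x: "isFree n J x" and f: "isF n f"
    and IH: "\<And>e. hcomp D e x \<in> rsub n (homog_upto D e T \<union> P)"
  shows "hcomp D e (ract x f) \<in> rsub n (homog_upto D e T \<union> P)"
proof -
  let ?E = "(\<lambda>(i, u). D i + int (length u)) ` {(i, u). x i u \<noteq> 0}"
  have fE: "finite ?E" using finite_degrees_free[OF x] .
  have inE: "\<forall>i u. x i u \<noteq> 0 \<longrightarrow> D i + int (length u) \<in> ?E" by auto
  have "ract (hcomp D e' x) (hcompF (e - e') f) \<in> rsub n (homog_upto D e T \<union> P)" for e'
  proof (cases "e' \<le> e")
    case True
    have "hcomp D e' x \<in> rsub n (homog_upto D e T \<union> P)"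
      by (rule rsub_mono[OF IH]) (use homog_upto_mono[OF True] in blast)
    then show ?thesis using f by (intro rsub.rmul isF_hcompF)
  next
    case False
    then show ?thesis by (simp add: hcompF_negative ract_zero_right rsub.zero)
  qed
  then have "(\<lambda>i w. \<Sum>e'\<in>?E. ract (hcomp D e' x) (hcompF (e - e') f) i w) \<in> rsub n (homog_upto D e T \<union> P)"
    using fE by (intro rsub_sum)
  then show ?thesis using hcomp_ract[OF fE inE] by simp
qed

lemma hcompF_fmul_in_tideal_upto:
  assumes a: "isF n a" and f: "isF n f"
    and IH: "\<And>e. hcompF e a \<in> tideal n (homogF_upto e T)"
  shows "hcompF e (fmul f a) \<in> tideal n (homogF_upto e T)"
    and "hcompF e (fmul a f) \<in> tideal n (homogF_upto e T)"
proof -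
  let ?E = "(\<lambda>u. int (length u)) ` {u. a u \<noteq> 0}"
  have fE: "finite ?E" using finite_degrees_F[OF a] .
  have inE: "\<forall>u. a u \<noteq> 0 \<longrightarrow> int (length u) \<in> ?E" by auto
  have low: "hcompF e' a \<in> tideal n (homogF_upto e T)" if "e' \<le> e" for e'
    by (rule tideal_mono[OF IH homogF_upto_mono[OF that]])
  have "fmul (hcompF (e - e') f) (hcompF e' a) \<in> tideal n (homogF_upto e T)" for e'
    using low f
    by (cases "e' \<le> e") (auto simp: hcompF_negative fmul_zero_left tideal.zero intro: tideal.lmul isF_hcompF)
  then have "(\<lambda>w. \<Sum>e'\<in>?E. fmul (hcompF (e - e') f) (hcompF e' a) w) \<in> tideal n (homogF_upto e T)"
    using fE by (intro tideal_sum)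
  then show "hcompF e (fmul f a) \<in> tideal n (homogF_upto e T)"
    using hcompF_fmul_right_degrees[OF fE inE] by simp
  have "fmul (hcompF e' a) (hcompF (e - e') f) \<in> tideal n (homogF_upto e T)" for e'
    using low f
    by (cases "e' \<le> e") (auto simp: hcompF_negative fmul_zero_right tideal.zero intro: tideal.rmul isF_hcompF)
  then have "(\<lambda>w. \<Sum>e'\<in>?E. fmul (hcompF e' a) (hcompF (e - e') f) w) \<in> tideal n (homogF_upto e T)"
    using fE by (intro tideal_sum)
  then show "hcompF e (fmul a f) \<in> tideal n (homogF_upto e T)"
    using hcompF_fmul_left_degrees[OF fE inE] by simp
qed

lemma hcomp_in_rsub_upto:
  assumes T: "\<forall>t\<in>T. isFree n J t \<and> (\<exists>e. homog D e t)"
    and P: "\<forall>p\<in>P. isFree n J p \<and> (\<forall>e. hcomp D e p \<in> P)"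
    and y: "y \<in> rsub n (T \<union> P)"
  shows "isFree n J y \<and> (\<forall>e. hcomp D e y \<in> rsub n (homog_upto D e T \<union> P))"
  using y
proof (induction y rule: rsub.induct)
  case (gen x)
  then show ?case
  proof
    assume x: "x \<in> T"
    then obtain e0 where e0: "homog D e0 x" using T by blast
    then have "x \<in> homog_upto D e0 T" using x unfolding homog_upto_def by blast
    then have "hcomp D e x \<in> rsub n (homog_upto D e T \<union> P)" for e
      using hcomp_homog[OF e0, of e] by (auto intro: rsub.gen rsub.zero)
    then show ?thesis using x T by blast
  next
    assume "x \<in> P" then show ?thesis using P by (auto intro: rsub.gen)
  qed
next
  case zero
  have "hcomp D e (\<lambda>_ _. 0) = (\<lambda>_ _. (0::'a))" for e by (auto simp: hcomp_def fun_eq_iff)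
  then show ?case by (simp add: isFree_zero rsub.zero)
next
  case (add x y)
  have "hcomp D e (\<lambda>i w. x i w + y i w) = (\<lambda>i w. hcomp D e x i w + hcomp D e y i w)" for e
    by (auto simp: hcomp_def fun_eq_iff)
  then show ?case using add.IH by (simp add: isFree_add rsub.add)
next
  case (rmul x f)
  then show ?case using hcomp_ract_in_rsub_upto isFree_ract by blast
qed

lemma hcompF_in_tideal_upto:
  assumes T: "\<forall>t\<in>T. isF n t \<and> (\<exists>e. homogF e t)"
    and y: "y \<in> tideal n T"
  shows "isF n y \<and> (\<forall>e. hcompF e y \<in> tideal n (homogF_upto e T))"
  using y
proof (induction y rule: tideal.induct)
  case (gen x)
  then obtain e0 where e0: "homogF e0 x" using T by blast
  then have "x \<in> homogF_upto e0 T" using gen unfolding homogF_upto_def by blast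
  then have "hcompF e x \<in> tideal n (homogF_upto e T)" for e
    using hcompF_homogF[OF e0, of e] by (auto intro: tideal.gen tideal.zero)
  then show ?case using gen T by blast
next
  case zero
  have "hcompF e (\<lambda>_. 0) = (\<lambda>_. (0::'a))" for e by (auto simp: hcompF_def fun_eq_iff)
  then show ?case by (simp add: isF_zero tideal.zero)
next
  case (add x y)
  have "hcompF e (\<lambda>w. x w + y w) = (\<lambda>w. hcompF e x w + hcompF e y w)" for e
    by (auto simp: hcompF_def fun_eq_iff)
  then show ?case using add.IH by (simp add: isF_add tideal.add)
next
  case (lmul a f)
  then show ?case using hcompF_fmul_in_tideal_upto(1) isF_fmul by blast
next
  case (rmul a f)
  then show ?case using hcompF_fmul_in_tideal_upto(2) isF_fmul by blast
qed

lemma Ipart_hcomp: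
  assumes G: "\<forall>g\<in>G. set g \<subseteq> {..<n}" and p: "p \<in> Ipart n J (tideal n (mono ` G))"
  shows "hcomp D e p \<in> Ipart n J (tideal n (mono ` G))"
proof -
  have "isFree n J (hcomp D e p)" using p isFree_hcomp unfolding Ipart_def by blast
  moreover have "w \<in> ideal_words G" if "hcomp D e p j w \<noteq> 0" for j w
    using that p unfolding Ipart_monomial_eq[OF G] hcomp_def by (auto split: if_splits)
  ultimately show ?thesis unfolding Ipart_monomial_eq[OF G] by blast
qed

lemma homog_add:
  assumes "homog D k x" "homog D k y" shows "homog D k (\<lambda>i w. x i w + y i w)"
proof -
  have "x j w \<noteq> 0 \<or> y j w \<noteq> 0" if "x j w + y j w \<noteq> 0" for j w using that by auto
  with assms show ?thesis unfolding homog_def by blast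
qed

lemma homog_scale: "homog D k x \<Longrightarrow> homog D k (ract x (cmono c []))"
  unfolding homog_def by (simp add: ract_cmono_Nil_right)

lemma homog_unique: "homog D e x \<Longrightarrow> homog D e' x \<Longrightarrow> e \<noteq> e' \<Longrightarrow> x = (\<lambda>_ _. 0)"
  unfolding homog_def by (auto simp: fun_eq_iff)

lemma homogF_unique: "homogF e x \<Longrightarrow> homogF e' x \<Longrightarrow> e \<noteq> e' \<Longrightarrow> x = (\<lambda>_. 0)"
  unfolding homogF_def by (auto simp: fun_eq_iff)

lemma homog_in_rsub_without:
  assumes T: "\<forall>t\<in>T. isFree n J t \<and> (\<exists>e. homog D e t)"
    and P: "\<forall>p\<in>P. isFree n J p \<and> (\<forall>e. hcomp D e p \<in> P)"
    and y: "y \<in> rsub n (T \<union> P)" "homog D e y"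
    and b: "homog D k b" "b \<noteq> (\<lambda>_ _. 0)" "e < k"
  shows "y \<in> rsub n ((T - {b}) \<union> P)"
proof -
  have "hcomp D e y \<in> rsub n (homog_upto D e T \<union> P)"
    using hcomp_in_rsub_upto[OF T P y(1)] by blast
  then have low: "y \<in> rsub n (homog_upto D e T \<union> P)"
    by (simp add: hcomp_homog[OF y(2)])
  have "\<not> homog D e' b" if "e' \<le> e" for e'
  proof
    assume "homog D e' b"
    with b that have "b = (\<lambda>_ _. 0)" by (intro homog_unique[of D e' b k]) auto
    with b(2) show False ..
  qed
  then have "homog_upto D e T \<union> P \<subseteq> (T - {b}) \<union> P" unfolding homog_upto_def by blast
  with low show ?thesis by (rule rsub_mono)
qed

lemma homogF_in_tideal_without:
  assumes T: "\<forall>t\<in>T. isF n t \<and> (\<exists>e. homogF e t)"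
    and y: "y \<in> tideal n T" "homogF e y"
    and b: "homogF k b" "b \<noteq> (\<lambda>_. 0)" "e < k"
  shows "y \<in> tideal n (T - {b})"
proof -
  have "hcompF e y \<in> tideal n (homogF_upto e T)"
    using hcompF_in_tideal_upto[OF T y(1)] by blast
  then have low: "y \<in> tideal n (homogF_upto e T)"
    by (simp add: hcompF_homogF[OF y(2)])
  have "\<not> homogF e' b" if "e' \<le> e" for e'
  proof
    assume "homogF e' b"
    with b that have "b = (\<lambda>_. 0)" by (intro homogF_unique[of e' b k]) auto
    with b(2) show False ..
  qed
  then have "homogF_upto e T \<subseteq> T - {b}" unfolding homogF_upto_def by blast
  with low show ?thesis by (rule tideal_mono)
qed

section \<open>Counting the elements of a minimal homogeneous basis\<close>

lemma Free_on_vanishes_below_min_position: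
  assumes "x \<in> Free_on n J U" "(j, w) \<in> min_positions G U" "m < length w"
  shows "x j (take m w) = 0"
proof -
  have "(j, take m w) \<notin> U"
    using assms(2,3) by (intro min_positions_minimal[of j w G U "take m w" "drop m w"]) auto
  then show ?thesis using assms(1) unfolding Free_on_def by blast
qed

lemma ract_at_min_position:
  assumes "x \<in> Free_on n J U" "(j, w) \<in> min_positions G U"
  shows "ract x f j w = x j w * f []"
  unfolding ract_def
  by (subst sum_atLeastAtMost_single[where k="length w"])
    (auto simp: Free_on_vanishes_below_min_position[OF assms])

lemma vec_in_Free_on:
  assumes "(j, w) \<in> mono_closure n J G S"
  shows "vec j w \<in> Free_on n J (mono_closure n J G S)"
proof -
  have "isFree n J (vec j w)" using assms mono_closure_positions by (blast intro: isFree_vec)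
  with assms show ?thesis unfolding Free_on_def by (auto simp: vec_def)
qed

text \<open>Restricting coefficients to the minimal positions of degree \<open>k\<close> kills \<open>Ipart\<close> and
  everything generated in positive degree, and maps the degree-\<open>k\<close> elements of any minimal
  homogeneous basis \<open>B\<close> to a basis of the functions on these positions.\<close>
locale monomial_submodule_basis =
  fixes n :: nat and J :: "nat set" and D :: "nat \<Rightarrow> int" and G :: "nat list set"
    and S :: "(nat \<times> nat list) set" and B :: "(nat \<Rightarrow> nat list \<Rightarrow> 'k::field) set"
  assumes letters: "\<forall>g\<in>G. set g \<subseteq> {..<n}"
    and positions: "S \<subseteq> {(j, w). j \<in> J \<and> set w \<subseteq> {..<n}}"
    and basis: "minbasis n J D (tideal n (mono ` G)) (Free_on n J (mono_closure n J G S)) B"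
begin

abbreviation "U \<equiv> mono_closure n J G S"

abbreviation "P \<equiv> Ipart n J (tideal n (mono ` G)) :: (nat \<Rightarrow> nat list \<Rightarrow> 'k) set"

definition min_positions_deg :: "int \<Rightarrow> (nat \<times> nat list) set" where
  "min_positions_deg k = {p \<in> min_positions G U. D (fst p) + int (length (snd p)) = k}"

definition proj :: "int \<Rightarrow> (nat \<Rightarrow> nat list \<Rightarrow> 'k) \<Rightarrow> nat \<times> nat list \<Rightarrow> 'k" where
  "proj k y = (\<lambda>p. if p \<in> min_positions_deg k then y (fst p) (snd p) else 0)"

lemma generated: "Free_on n J U = rsub n (B \<union> P)"
  using basis unfolding minbasis_def by blast

lemma irredundant: "b \<in> B \<Longrightarrow> b \<notin> rsub n ((B - {b}) \<union> P)"
  using basis unfolding minbasis_def by blast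

lemma basis_homog: "\<forall>t\<in>B. isFree n J t \<and> (\<exists>e. homog D e t)"
  using basis unfolding minbasis_def by blast

lemma Ipart_closed: "\<forall>p\<in>P. isFree n J p \<and> (\<forall>e. hcomp D e p \<in> P)"
  using Ipart_hcomp[OF letters] unfolding Ipart_def by blast

lemma proj_ract: "x \<in> Free_on n J U \<Longrightarrow> proj k (ract x f) = fscale (f []) (proj k x)"
  using ract_at_min_position
  by (auto simp: proj_def fscale_def min_positions_deg_def fun_eq_iff mult.commute)

lemma proj_add: "proj k (\<lambda>i w. x i w + y i w) = proj k x + proj k y"
  by (auto simp: proj_def fun_eq_iff)

lemma proj_scale: "proj k (ract x (cmono c [])) = fscale c (proj k x)"
  by (auto simp: proj_def fscale_def ract_cmono_Nil_right fun_eq_iff)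

lemma proj_Ipart: "p \<in> P \<Longrightarrow> proj k p = 0"
  by (auto simp: proj_def min_positions_deg_def min_positions_def fun_eq_iff
      Ipart_monomial_eq[OF letters])

lemma proj_in_span: "y \<in> rsub n (B \<union> P) \<Longrightarrow> proj k y \<in> fun_vs.span (proj k ` B)"
proof (induction y rule: rsub.induct)
  case (gen x)
  show ?case
  proof (cases "x \<in> B")
    case True then show ?thesis by (auto intro: fun_vs.span_base)
  next
    case False
    then have "proj k x = 0" using gen proj_Ipart by blast
    then show ?thesis by (simp only: fun_vs.span_zero)
  qed
next
  case zero
  have "proj k (\<lambda>_ _. 0) = 0" by (auto simp: proj_def fun_eq_iff)
  then show ?case using fun_vs.span_zero by metis
next
  case (add x y)
  then show ?case unfolding proj_add by (intro fun_vs.span_add) blast+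
next
  case (rmul x f)
  then have "x \<in> Free_on n J U" using generated by simp
  then show ?case using rmul.IH by (simp add: proj_ract fun_vs.span_scale)
qed

lemma span_proj_degree:
  "fun_vs.span (proj k ` B) \<subseteq> fun_vs.span (proj k ` {b\<in>B. homog D k b})"
proof -
  have "proj k ` B \<subseteq> insert 0 (proj k ` {b\<in>B. homog D k b})"
  proof
    fix v assume "v \<in> proj k ` B"
    then obtain b where b: "b \<in> B" "v = proj k b" by blast
    show "v \<in> insert 0 (proj k ` {b\<in>B. homog D k b})"
    proof (cases "homog D k b")
      case True then show ?thesis using b by blast
    next
      case False
      obtain e where e: "homog D e b" using b(1) basis_homog by blast
      have "proj k b = 0"
      proof
        fix p show "proj k b p = 0 p"
          using e False unfolding proj_def min_positions_deg_def homog_def by (cases p) auto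
      qed
      then show ?thesis using b by simp
    qed
  qed
  then have "fun_vs.span (proj k ` B) \<subseteq> fun_vs.span (insert 0 (proj k ` {b\<in>B. homog D k b}))"
    by (rule fun_vs.span_mono)
  then show ?thesis by (simp add: fun_vs.span_insert_0)
qed

lemma unit_fun_in_span:
  assumes p: "p \<in> min_positions_deg k"
  shows "unit_fun p \<in> fun_vs.span (proj k ` {b\<in>B. homog D k b})"
proof -
  obtain j w where jw: "p = (j, w)" by (cases p)
  have jwU: "(j, w) \<in> U" using p jw min_positions_subset unfolding min_positions_deg_def by auto
  then have "(vec j w :: nat \<Rightarrow> nat list \<Rightarrow> 'k) \<in> Free_on n J U" by (rule vec_in_Free_on)
  then have "proj k (vec j w) \<in> fun_vs.span (proj k ` B)" using proj_in_span generated by simp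
  moreover have "proj k (vec j w) = unit_fun p"
    using p jw by (auto simp: proj_def unit_fun_def vec_def fun_eq_iff)
  ultimately show ?thesis using span_proj_degree by auto
qed

text \<open>Each monomial of such a \<open>y\<close> is a right multiple of a monomial of the module of lower
  degree, which is generated by basis elements of lower degree.\<close>
lemma vanishing_homog_in_rsub_without:
  assumes b0: "b0 \<in> B" "homog D k b0"
    and y: "y \<in> Free_on n J U" "homog D k y" "\<forall>p\<in>min_positions_deg k. y (fst p) (snd p) = 0"
  shows "y \<in> rsub n ((B - {b0}) \<union> P)"
proof -
  let ?Y = "rsub n ((B - {b0}) \<union> P)"
  have b0_nonzero: "b0 \<noteq> (\<lambda>_ _. 0)" using irredundant[OF b0(1)] rsub.zero by auto
  have lower: "vec j u \<in> ?Y" if "(j, u) \<in> U" "D j + int (length u) < k" for j u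
  proof -
    have "(vec j u :: nat \<Rightarrow> nat list \<Rightarrow> 'k) \<in> Free_on n J U" using that(1) by (rule vec_in_Free_on)
    then show ?thesis
      using homog_in_rsub_without[OF basis_homog Ipart_closed _ homog_vec b0(2) b0_nonzero that(2)]
        generated by simp
  qed
  have fin: "finite {(j, w). y j w \<noteq> 0}" using y(1) unfolding Free_on_def isFree_def by auto
  have "vec j w \<in> ?Y" if nz: "y j w \<noteq> 0" for j w
  proof -
    have inU: "(j, w) \<in> U" using nz y(1) unfolding Free_on_def by auto
    have deg: "D j + int (length w) = k" using nz y(2) unfolding homog_def by auto
    have jw: "j \<in> J" "set w \<subseteq> {..<n}" using inU unfolding mono_closure_def by auto
    consider "w \<in> ideal_words G" | u v where "(j, u) \<in> min_positions G U" "w = u @ v"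
      using min_position_prefix[OF inU] by blast
    then show ?thesis
    proof cases
      case 1
      then show ?thesis using vec_in_Ipart[OF letters jw] by (auto intro: rsub.gen)
    next
      case (2 u v)
      have "v \<noteq> []" using 2 deg nz y(3) unfolding min_positions_deg_def by auto
      then have "vec j u \<in> ?Y" using 2 deg min_positions_subset by (intro lower) auto
      then have "ract (vec j u) (mono v) \<in> ?Y" by (rule rsub.rmul) (use jw 2 in \<open>auto intro: isF_mono\<close>)
      then show ?thesis using 2 by (simp add: vec_append)
    qed
  qed
  then have "(\<lambda>i u. \<Sum>(j, w)\<in>{(j, w). y j w \<noteq> 0}. cvec (y j w) j w i u) \<in> ?Y"
    using fin unfolding cvec_eq_ract by (intro rsub_sum) (auto intro: rsub_scale)
  then show ?thesis by (subst free_eq_sum_cvec[OF fin order_refl])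
qed

lemma span_proj_lift:
  assumes "c \<in> fun_vs.span (proj k ` ({b\<in>B. homog D k b} - {b0}))"
  shows "\<exists>z \<in> rsub n ((B - {b0}) \<union> P). homog D k z \<and> proj k z = c"
  using assms
proof (induction rule: fun_vs.span_induct_alt)
  case base
  have "proj k (\<lambda>_ _. 0) = 0" by (auto simp: proj_def fun_eq_iff)
  then show ?case by (intro bexI[of _ "\<lambda>_ _. 0"]) (auto simp: homog_def rsub.zero)
next
  case (step r x c)
  obtain b where b: "b \<in> B - {b0}" "homog D k b" "x = proj k b" using step.hyps(1) by auto
  obtain z where z: "z \<in> rsub n ((B - {b0}) \<union> P)" "homog D k z" "proj k z = c"
    using step.IH by blast
  let ?z = "\<lambda>i u. ract b (cmono r []) i u + z i u"
  have "?z \<in> rsub n ((B - {b0}) \<union> P)"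
    by (rule rsub.add[OF rsub_scale[OF rsub.gen] z(1)]) (use b in blast)
  moreover have "homog D k ?z" using b z by (intro homog_add homog_scale)
  moreover have "proj k ?z = fscale r x + c" using b z by (simp add: proj_add proj_scale)
  ultimately show ?case by blast
qed

lemma proj_independent:
  assumes b0: "b0 \<in> B" "homog D k b0"
  shows "proj k b0 \<notin> fun_vs.span (proj k ` ({b\<in>B. homog D k b} - {b0}))"
proof
  assume "proj k b0 \<in> fun_vs.span (proj k ` ({b\<in>B. homog D k b} - {b0}))"
  then obtain z where z: "z \<in> rsub n ((B - {b0}) \<union> P)" "homog D k z" "proj k z = proj k b0"
    using span_proj_lift by blast
  let ?y = "\<lambda>i u. b0 i u + ract z (cmono (-1) []) i u"
  have "z \<in> rsub n (B \<union> P)" using rsub_mono[OF z(1)] by blast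
  then have "?y \<in> rsub n (B \<union> P)" using rsub.add[OF rsub.gen rsub_scale] b0(1) by blast
  moreover have "homog D k ?y" using b0 z by (intro homog_add homog_scale)
  moreover have "\<forall>p\<in>min_positions_deg k. ?y (fst p) (snd p) = 0"
  proof
    fix p assume "p \<in> min_positions_deg k"
    then have "z (fst p) (snd p) = b0 (fst p) (snd p)" using fun_cong[OF z(3), of p] by (simp add: proj_def)
    then show "?y (fst p) (snd p) = 0" by (simp add: ract_cmono_Nil_right)
  qed
  ultimately have "?y \<in> rsub n ((B - {b0}) \<union> P)"
    using vanishing_homog_in_rsub_without[OF b0] generated by simp
  from rsub.add[OF this z(1)] have "b0 \<in> rsub n ((B - {b0}) \<union> P)"
    by (simp add: ract_cmono_Nil_right)
  then show False using irredundant b0 by blast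
qed

theorem card_basis_degree:
  assumes "finite (min_positions G U)"
  shows "finite {b\<in>B. homog D k b} \<and> card {b\<in>B. homog D k b} = card (min_positions_deg k)"
proof (rule card_eq_if_projections_basis[where \<pi>="proj k"])
  show "finite (min_positions_deg k)" using assms unfolding min_positions_deg_def by simp
  show "proj k b q = 0" if "q \<notin> min_positions_deg k" for b q using that by (simp add: proj_def)
qed (use unit_fun_in_span proj_independent in auto)

end

lemma homogF_add:
  assumes "homogF k f" "homogF k g" shows "homogF k (\<lambda>w. f w + g w)"
proof -
  have "f w \<noteq> 0 \<or> g w \<noteq> 0" if "f w + g w \<noteq> 0" for w using that by auto
  with assms show ?thesis unfolding homogF_def by blast
qed

lemma homogF_scale: "homogF k f \<Longrightarrow> homogF k (fmul (cmono c []) f)"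
  unfolding homogF_def by (simp add: fmul_cmono_Nil_left)

text \<open>The same count for a monomial ideal, with the minimal words in place of the minimal
  positions; here both one-sided products by elements without constant term are killed.\<close>
locale monomial_ideal_basis =
  fixes n :: nat and G :: "nat list set" and B :: "(nat list \<Rightarrow> 'k::field) set"
  assumes letters: "\<forall>g\<in>G. set g \<subseteq> {..<n}"
    and basis: "minbasis_ideal n (tideal n (mono ` G)) B"
begin

definition min_words_deg :: "int \<Rightarrow> nat list set" where
  "min_words_deg k = {t \<in> min_words G. int (length t) = k}"

definition projF :: "int \<Rightarrow> (nat list \<Rightarrow> 'k) \<Rightarrow> nat list \<Rightarrow> 'k" where
  "projF k y = (\<lambda>w. if w \<in> min_words_deg k then y w else 0)"

lemma generated: "tideal n (mono ` G) = tideal n B"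
  using basis unfolding minbasis_ideal_def by blast

lemma irredundant: "b \<in> B \<Longrightarrow> b \<notin> tideal n (B - {b})"
  using basis unfolding minbasis_ideal_def by blast

lemma basis_homog: "\<forall>t\<in>B. isF n t \<and> (\<exists>e. homogF e t)"
  using basis unfolding minbasis_ideal_def by blast

lemma vanishes_at_proper_factor:
  assumes "a \<in> tideal n (mono ` G)" "w \<in> min_words G" "w = u @ v @ x" "u \<noteq> [] \<or> x \<noteq> []"
  shows "a v = 0"
  using assms unfolding tideal_monomial_eq[OF letters] F_on_def min_words_def by blast

lemma projF_lmul: "a \<in> tideal n (mono ` G) \<Longrightarrow> projF k (fmul f a) = fscale (f []) (projF k a)"
proof
  fix w assume a: "a \<in> tideal n (mono ` G)"
  show "projF k (fmul f a) w = fscale (f []) (projF k a) w"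
  proof (cases "w \<in> min_words_deg k")
    case True
    then have "a (drop m w) = 0" if "0 < m" "m \<le> length w" for m
      using that by (intro vanishes_at_proper_factor[OF a, of w "take m w" _ "[]"])
        (auto simp: min_words_deg_def)
    then have "fmul f a w = f [] * a w"
      unfolding fmul_def by (subst sum_atLeastAtMost_single[where k=0]) auto
    then show ?thesis using True by (simp add: projF_def fscale_def)
  qed (simp add: projF_def fscale_def)
qed

lemma projF_rmul: "a \<in> tideal n (mono ` G) \<Longrightarrow> projF k (fmul a f) = fscale (f []) (projF k a)"
proof
  fix w assume a: "a \<in> tideal n (mono ` G)"
  show "projF k (fmul a f) w = fscale (f []) (projF k a) w"
  proof (cases "w \<in> min_words_deg k")
    case True
    then have "a (take m w) = 0" if "m < length w" for m
      using that by (intro vanishes_at_proper_factor[OF a, of w "[]" _ "drop m w"])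
        (auto simp: min_words_deg_def)
    then have "fmul a f w = a w * f []"
      unfolding fmul_def by (subst sum_atLeastAtMost_single[where k="length w"]) auto
    then show ?thesis using True by (simp add: projF_def fscale_def mult.commute)
  qed (simp add: projF_def fscale_def)
qed

lemma projF_add: "projF k (\<lambda>w. f w + g w) = projF k f + projF k g"
  by (auto simp: projF_def fun_eq_iff)

lemma projF_scale: "projF k (fmul (cmono c []) f) = fscale c (projF k f)"
  by (auto simp: projF_def fscale_def fmul_cmono_Nil_left fun_eq_iff)

lemma projF_in_span: "y \<in> tideal n B \<Longrightarrow> projF k y \<in> fun_vs.span (projF k ` B)"
proof (induction y rule: tideal.induct)
  case (gen x)
  then show ?case by (auto intro: fun_vs.span_base)
next
  case zero
  have "projF k (\<lambda>_. 0) = 0" by (auto simp: projF_def fun_eq_iff)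
  then show ?case by (simp only: fun_vs.span_zero)
next
  case (add x y)
  then show ?case unfolding projF_add by (intro fun_vs.span_add) blast+
next
  case (lmul a f)
  then have "a \<in> tideal n (mono ` G)" using generated by simp
  then show ?case using lmul.IH by (simp add: projF_lmul fun_vs.span_scale)
next
  case (rmul a f)
  then have "a \<in> tideal n (mono ` G)" using generated by simp
  then show ?case using rmul.IH by (simp add: projF_rmul fun_vs.span_scale)
qed

lemma span_projF_degree:
  "fun_vs.span (projF k ` B) \<subseteq> fun_vs.span (projF k ` {b\<in>B. homogF k b})"
proof -
  have "projF k ` B \<subseteq> insert 0 (projF k ` {b\<in>B. homogF k b})"
  proof
    fix v assume "v \<in> projF k ` B"
    then obtain b where b: "b \<in> B" "v = projF k b" by blast
    show "v \<in> insert 0 (projF k ` {b\<in>B. homogF k b})"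
    proof (cases "homogF k b")
      case True then show ?thesis using b by blast
    next
      case False
      obtain e where e: "homogF e b" using b(1) basis_homog by blast
      have "projF k b = 0"
      proof
        fix w show "projF k b w = 0 w"
          using e False unfolding projF_def min_words_deg_def homogF_def by auto
      qed
      then show ?thesis using b by simp
    qed
  qed
  then have "fun_vs.span (projF k ` B) \<subseteq> fun_vs.span (insert 0 (projF k ` {b\<in>B. homogF k b}))"
    by (rule fun_vs.span_mono)
  then show ?thesis by (simp add: fun_vs.span_insert_0)
qed

lemma unit_fun_in_span:
  assumes t: "t \<in> min_words_deg k"
  shows "unit_fun t \<in> fun_vs.span (projF k ` {b\<in>B. homogF k b})"
proof -
  have "t \<in> G" using t min_words_subset unfolding min_words_deg_def by blast
  then have "(mono t :: nat list \<Rightarrow> 'k) \<in> tideal n (mono ` G)" by (rule imageI[THEN tideal.gen])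
  then have "projF k (mono t) \<in> fun_vs.span (projF k ` B)" using projF_in_span generated by simp
  moreover have "projF k (mono t) = unit_fun t"
    using t by (auto simp: projF_def unit_fun_def mono_def fun_eq_iff)
  ultimately show ?thesis using span_projF_degree by auto
qed

text \<open>A word of degree \<open>k\<close> in the ideal that is not a minimal word contains a minimal word
  of lower degree as a factor.\<close>
lemma vanishing_homogF_in_tideal_without:
  assumes b0: "b0 \<in> B" "homogF k b0"
    and y: "y \<in> tideal n (mono ` G)" "homogF k y" "\<forall>w\<in>min_words_deg k. y w = 0"
  shows "y \<in> tideal n (B - {b0})"
proof -
  let ?Y = "tideal n (B - {b0})"
  have b0_nonzero: "b0 \<noteq> (\<lambda>_. 0)" using irredundant[OF b0(1)] tideal.zero by auto
  have yF: "y \<in> F_on n (ideal_words G)" using y(1) by (simp add: tideal_monomial_eq[OF letters])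
  have fin: "finite {w. y w \<noteq> 0}" using yF unfolding F_on_def isF_def by auto
  have "cmono (y w) w \<in> ?Y" if nz: "y w \<noteq> 0" for w
  proof -
    have w: "w \<in> ideal_words G" "set w \<subseteq> {..<n}" using nz yF unfolding F_on_def isF_def by auto
    have deg: "int (length w) = k" using nz y(2) unfolding homogF_def by auto
    obtain a t c where atc: "t \<in> min_words G" "w = a @ t @ c" using min_word_factor[OF w(1)] by blast
    have "a \<noteq> [] \<or> c \<noteq> []"
    proof (rule ccontr)
      assume "\<not> (a \<noteq> [] \<or> c \<noteq> [])"
      then have "w \<in> min_words_deg k" using atc deg unfolding min_words_deg_def by auto
      then show False using y(3) nz by blast
    qed
    then have "length t < length w" using atc by auto
    then have lower: "int (length t) < k" using deg by linarith
    have t: "t \<in> ideal_words G" "set t \<subseteq> {..<n}" using atc w min_words_ideal_words by auto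
    have "(mono t :: nat list \<Rightarrow> 'k) \<in> tideal n (mono ` G)" by (rule mono_in_tideal[OF t])
    then have "mono t \<in> tideal n B" using generated by simp
    then have "mono t \<in> ?Y"
      using homogF_in_tideal_without[OF basis_homog _ homogF_mono b0(2) b0_nonzero lower] by blast
    then have "mono (a @ t @ c) \<in> ?Y" using atc w(2) by (intro mono_factor_in_tideal) auto
    then have "mono w \<in> ?Y" using atc(2) by simp
    then show ?thesis unfolding cmono_eq_fmul[of "y w" w] by (rule tideal_scale)
  qed
  then have "(\<lambda>u. \<Sum>w\<in>{w. y w \<noteq> 0}. cmono (y w) w u) \<in> ?Y"
    using fin by (intro tideal_sum) auto
  then show ?thesis by (subst F_eq_sum_cmono[OF fin order_refl])
qed

lemma span_projF_lift:
  assumes "c \<in> fun_vs.span (projF k ` ({b\<in>B. homogF k b} - {b0}))"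
  shows "\<exists>z \<in> tideal n (B - {b0}). homogF k z \<and> projF k z = c"
  using assms
proof (induction rule: fun_vs.span_induct_alt)
  case base
  have "projF k (\<lambda>_. 0) = 0" by (auto simp: projF_def fun_eq_iff)
  then show ?case by (intro bexI[of _ "\<lambda>_. 0"]) (auto simp: homogF_def tideal.zero)
next
  case (step r x c)
  obtain b where b: "b \<in> B - {b0}" "homogF k b" "x = projF k b" using step.hyps(1) by auto
  obtain z where z: "z \<in> tideal n (B - {b0})" "homogF k z" "projF k z = c"
    using step.IH by blast
  let ?z = "\<lambda>u. fmul (cmono r []) b u + z u"
  have "?z \<in> tideal n (B - {b0})"
    by (rule tideal.add[OF tideal_scale[OF tideal.gen] z(1)]) (use b in blast)
  moreover have "homogF k ?z" using b z by (intro homogF_add homogF_scale)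
  moreover have "projF k ?z = fscale r x + c" using b z by (simp add: projF_add projF_scale)
  ultimately show ?case by blast
qed

lemma projF_independent:
  assumes b0: "b0 \<in> B" "homogF k b0"
  shows "projF k b0 \<notin> fun_vs.span (projF k ` ({b\<in>B. homogF k b} - {b0}))"
proof
  assume "projF k b0 \<in> fun_vs.span (projF k ` ({b\<in>B. homogF k b} - {b0}))"
  then obtain z where z: "z \<in> tideal n (B - {b0})" "homogF k z" "projF k z = projF k b0"
    using span_projF_lift by blast
  let ?y = "\<lambda>u. b0 u + fmul (cmono (-1) []) z u"
  have "z \<in> tideal n B" using tideal_mono[OF z(1)] by blast
  then have "?y \<in> tideal n B" using tideal.add[OF tideal.gen tideal_scale] b0(1) by blast
  moreover have "homogF k ?y" using b0 z by (intro homogF_add homogF_scale)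
  moreover have "\<forall>w\<in>min_words_deg k. ?y w = 0"
  proof
    fix w assume "w \<in> min_words_deg k"
    then have "z w = b0 w" using fun_cong[OF z(3), of w] by (simp add: projF_def)
    then show "?y w = 0" by (simp add: fmul_cmono_Nil_left)
  qed
  ultimately have "?y \<in> tideal n (B - {b0})"
    using vanishing_homogF_in_tideal_without[OF b0] generated by simp
  from tideal.add[OF this z(1)] have "b0 \<in> tideal n (B - {b0})"
    by (simp add: fmul_cmono_Nil_left)
  then show False using irredundant b0 by blast
qed

theorem card_basis_degree:
  assumes "finite G"
  shows "finite {b\<in>B. homogF k b} \<and> card {b\<in>B. homogF k b} = card (min_words_deg k)"
proof (rule card_eq_if_projections_basis[where \<pi>="projF k"])
  show "finite (min_words_deg k)"
    by (rule finite_subset[OF _ assms]) (use min_words_subset in \<open>auto simp: min_words_deg_def\<close>)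
  show "projF k b w = 0" if "w \<notin> min_words_deg k" for b w using that by (simp add: projF_def)
qed (use unit_fun_in_span projF_independent in auto)

end

section \<open>Syzygies of monomial submodules\<close>

lemma Ipart_vanishes_at_min_position:
  assumes G: "\<forall>g\<in>G. set g \<subseteq> {..<n}"
    and "p \<in> Ipart n J (tideal n (mono ` G))" "(j, w) \<in> min_positions G U"
  shows "p j w = 0"
  using assms(2,3) unfolding Ipart_monomial_eq[OF G] min_positions_def by auto

lemma finite_min_positions_if_fg:
  fixes T :: "(nat \<Rightarrow> nat list \<Rightarrow> 'k::field) set"
  assumes G: "\<forall>g\<in>G. set g \<subseteq> {..<n}"
    and T: "finite T" "T \<subseteq> {x. isFree n J x}"
    and U: "Free_on n J (mono_closure n J G S) = rsub n (T \<union> Ipart n J (tideal n (mono ` G)))"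
  shows "finite (min_positions G (mono_closure n J G S))"
proof -
  let ?U = "mono_closure n J G S"
  have covered: "\<exists>t\<in>T. t j w \<noteq> 0" if jw: "(j, w) \<in> min_positions G ?U" for j w
  proof -
    have "y j w \<noteq> 0 \<longrightarrow> (\<exists>t\<in>T. t j w \<noteq> 0)"
      if "y \<in> rsub n (T \<union> Ipart n J (tideal n (mono ` G)))" for y
      using that
    proof (induction y rule: rsub.induct)
      case (gen x)
      then show ?case using Ipart_vanishes_at_min_position[OF G _ jw] by blast
    next
      case (add x y)
      then show ?case by (cases "x j w = 0") auto
    next
      case (rmul x f)
      then have "x \<in> Free_on n J ?U" using U by simp
      then have "ract x f j w = x j w * f []" by (rule ract_at_min_position[OF _ jw])
      then show ?case using rmul.IH by simp
    qed simp
    moreover have "(vec j w :: nat \<Rightarrow> nat list \<Rightarrow> 'k) \<in> Free_on n J ?U"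
      using jw min_positions_subset by (blast intro: vec_in_Free_on)
    ultimately show ?thesis using U by (simp add: vec_def)
  qed
  have "min_positions G ?U \<subseteq> (\<Union>t\<in>T. {(j, w). t j w \<noteq> 0})"
    using covered by fast
  moreover have "finite (\<Union>t\<in>T. {(j, w). t j w \<noteq> 0})"
    using T unfolding isFree_def by auto
  ultimately show ?thesis by (rule finite_subset)
qed

lemma min_positions_prefix_eq:
  assumes "(a, w0) \<in> min_positions G U" "(a, w1) \<in> min_positions G U" "w0 @ v = w1 @ s"
  shows "w1 = w0"
proof -
  obtain us where "(w0 = w1 @ us \<and> us @ v = s) \<or> (w0 @ us = w1 \<and> v = us @ s)"
    using assms(3) unfolding append_eq_append_conv2 by blast
  then show ?thesis
  proof
    assume "w0 = w1 @ us \<and> us @ v = s"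
    then show ?thesis
      using min_positions_minimal[OF assms(1)] assms(2) min_positions_subset by fastforce
  next
    assume "w0 @ us = w1 \<and> v = us @ s"
    then show ?thesis
      using min_positions_minimal[OF assms(2)] assms(1) min_positions_subset by fastforce
  qed
qed

definition enum_min :: "nat list set \<Rightarrow> (nat \<times> nat list) set \<Rightarrow> nat \<Rightarrow> nat \<times> nat list" where
  "enum_min G U = (SOME h. bij_betw h {..<card (min_positions G U)} (min_positions G U))"

lemma enum_min_bij:
  assumes "finite (min_positions G U)"
  shows "bij_betw (enum_min G U) {..<card (min_positions G U)} (min_positions G U)"
proof -
  obtain h where "bij_betw h {..<card (min_positions G U)} (min_positions G U)"
    using ex_bij_betw_nat_finite[OF assms] by (auto simp: atLeast0LessThan)
  then show ?thesis unfolding enum_min_def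
    by (rule someI[where P="\<lambda>h. bij_betw h {..<card (min_positions G U)} (min_positions G U)"])
qed

text \<open>The positions of the syzygy module of the map sending the \<open>j\<close>-th basis vector to the
  \<open>j\<close>-th minimal monomial \<open>e\<^sub>a w\<close>: \<open>(j, v)\<close> is a syzygy position iff \<open>w v\<close> lies in the ideal.\<close>
definition syz_positions :: "nat \<Rightarrow> nat list set \<Rightarrow> (nat \<times> nat list) set \<Rightarrow> (nat \<times> nat list) set" where
  "syz_positions n G U = {(j, v). j < card (min_positions G U) \<and> set v \<subseteq> {..<n} \<and>
     snd (enum_min G U j) @ v \<in> ideal_words G}"

lemma dmap_vec_apply:
  fixes x :: "nat \<Rightarrow> nat list \<Rightarrow> 'k::field"
  assumes e: "bij_betw e {..<c} (min_positions G U)" and x: "isFree n {..<c} x"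
    and j: "j < c" "e j = (a, w0)"
  shows "dmap {..<c} (\<lambda>j. vec (fst (e j)) (snd (e j))) x a (w0 @ v) = x j v"
proof -
  let ?S = "{j\<in>{..<c}. \<exists>u. x j u \<noteq> 0}"
  have "ract (vec (fst (e j')) (snd (e j'))) (x j') a (w0 @ v) = (if j' = j then x j v else 0)"
    if j': "j' \<in> ?S" for j'
  proof (cases "j' = j")
    case True then show ?thesis using j by (simp add: ract_vec_left)
  next
    case False
    obtain a' w1 where aw': "e j' = (a', w1)" by (cases "e j'")
    have nc: "\<not> (a = a' \<and> length w1 \<le> length (w0 @ v) \<and> take (length w1) (w0 @ v) = w1)"
    proof
      assume h: "a = a' \<and> length w1 \<le> length (w0 @ v) \<and> take (length w1) (w0 @ v) = w1"
      then have split: "w0 @ v = w1 @ drop (length w1) (w0 @ v)"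
        using append_take_drop_id[of "length w1" "w0 @ v"] by simp
      have j'c: "j' < c" using j' by simp
      have "e j \<in> min_positions G U" "e j' \<in> min_positions G U"
        using e j(1) j'c unfolding bij_betw_def by auto
      then have "(a, w0) \<in> min_positions G U" "(a, w1) \<in> min_positions G U" using j(2) aw' h by auto
      then have "w1 = w0" using split by (rule min_positions_prefix_eq)
      then have "e j' = e j" using j(2) aw' h by simp
      then show False using e j(1) j'c False unfolding bij_betw_def by (auto dest: inj_onD)
    qed
    have "ract (vec (fst (e j')) (snd (e j'))) (x j') a (w0 @ v) = 0"
      unfolding ract_vec_left aw' fst_conv snd_conv by (rule if_not_P[OF nc])
    then show ?thesis using False by simp
  qed
  then have "dmap {..<c} (\<lambda>j. vec (fst (e j)) (snd (e j))) x a (w0 @ v)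
      = (\<Sum>j'\<in>?S. if j' = j then x j v else 0)"
    unfolding dmap_def by (intro sum.cong) auto
  also have "\<dots> = x j v" using j(1) by (auto simp: sum.delta)
  finally show ?thesis .
qed

lemma dmap_vec_nonzero:
  assumes "dmap {..<c} (\<lambda>j. vec (fst (e j)) (snd (e j))) x i w \<noteq> 0"
  shows "\<exists>j<c. \<exists>v. w = snd (e j) @ v \<and> x j v \<noteq> 0"
proof -
  obtain j where j: "j < c" "ract (vec (fst (e j)) (snd (e j))) (x j) i w \<noteq> 0"
    using sum.not_neutral_contains_not_neutral[OF assms[unfolded dmap_def]] by auto
  then have "take (length (snd (e j))) w = snd (e j)" "x j (drop (length (snd (e j))) w) \<noteq> 0"
    by (auto simp: ract_vec_left split: if_splits)
  moreover have "w = take (length (snd (e j))) w @ drop (length (snd (e j))) w" by simp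
  ultimately have "w = snd (e j) @ drop (length (snd (e j))) w \<and> x j (drop (length (snd (e j))) w) \<noteq> 0"
    by simp
  then show ?thesis using j(1) by (intro exI[of _ j] conjI exI[of _ "drop (length (snd (e j))) w"]) simp_all
qed

lemma isFree_dmap_vec:
  assumes e: "\<And>j. j < c \<Longrightarrow> fst (e j) \<in> J \<and> set (snd (e j)) \<subseteq> {..<n}"
    and x: "isFree n {..<c} x"
  shows "isFree n J (dmap {..<c} (\<lambda>j. vec (fst (e j)) (snd (e j))) x)"
proof -
  have "isFree n J (ract (vec (fst (e j)) (snd (e j))) (x j))" if "j < c" for j
    using e[OF that] by (intro isFree_ract isFree_vec isFree_component[OF x]) auto
  then show ?thesis unfolding dmap_def by (intro isFree_sum) auto
qed

text \<open>Right syzygies of a family of distinct minimal monomials are monomial.\<close>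
lemma dmap_vec_in_Ipart_iff:
  fixes x :: "nat \<Rightarrow> nat list \<Rightarrow> 'k::field"
  assumes e: "bij_betw e {..<c} (min_positions G U)"
    and U: "U \<subseteq> {(j, w). j \<in> J \<and> set w \<subseteq> {..<n}}"
    and G: "\<forall>g\<in>G. set g \<subseteq> {..<n}"
    and x: "isFree n {..<c} x"
  shows "dmap {..<c} (\<lambda>j. vec (fst (e j)) (snd (e j))) x \<in> Ipart n J (tideal n (mono ` G))
     \<longleftrightarrow> (\<forall>j v. x j v \<noteq> 0 \<longrightarrow> snd (e j) @ v \<in> ideal_words G)"
    (is "?y \<in> _ \<longleftrightarrow> _")
proof
  assume y: "?y \<in> Ipart n J (tideal n (mono ` G))"
  show "\<forall>j v. x j v \<noteq> 0 \<longrightarrow> snd (e j) @ v \<in> ideal_words G"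
  proof (intro allI impI)
    fix j v assume nz: "x j v \<noteq> 0"
    then have j: "j < c" using x unfolding isFree_def by auto
    obtain a w0 where aw: "e j = (a, w0)" by (cases "e j")
    have "?y a (w0 @ v) \<noteq> 0" using dmap_vec_apply[OF e x j aw] nz by simp
    then have "w0 @ v \<in> ideal_words G" using y unfolding Ipart_monomial_eq[OF G] by blast
    then show "snd (e j) @ v \<in> ideal_words G" using aw by simp
  qed
next
  assume R: "\<forall>j v. x j v \<noteq> 0 \<longrightarrow> snd (e j) @ v \<in> ideal_words G"
  have "e j \<in> U" if "j < c" for j
    by (rule subsetD[OF min_positions_subset bij_betw_apply[OF e]]) (use that in simp)
  then have "fst (e j) \<in> J \<and> set (snd (e j)) \<subseteq> {..<n}" if "j < c" for j
    using subsetD[OF U] that by (cases "e j") fastforce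
  then have "isFree n J ?y" using x by (rule isFree_dmap_vec)
  moreover have "w \<in> ideal_words G" if "?y i w \<noteq> 0" for i w
    using dmap_vec_nonzero[OF that] R by blast
  ultimately show "?y \<in> Ipart n J (tideal n (mono ` G))" unfolding Ipart_monomial_eq[OF G] by blast
qed

lemma mono_closure_syz_positions:
  "mono_closure n {..<card (min_positions G U)} G (syz_positions n G U) = syz_positions n G U"
proof
  show "mono_closure n {..<card (min_positions G U)} G (syz_positions n G U) \<subseteq> syz_positions n G U"
  proof
    fix p assume p: "p \<in> mono_closure n {..<card (min_positions G U)} G (syz_positions n G U)"
    obtain i y where py: "p = (i, y)" by (cases p)
    have "y \<in> ideal_words G \<or> (\<exists>u v. (i, u) \<in> syz_positions n G U \<and> y = u @ v)"
      using p py unfolding mono_closure_def by auto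
    then have "snd (enum_min G U i) @ y \<in> ideal_words G"
    proof
      assume "y \<in> ideal_words G" then show ?thesis by (rule ideal_words_append_left)
    next
      assume "\<exists>u v. (i, u) \<in> syz_positions n G U \<and> y = u @ v"
      then obtain u v where "snd (enum_min G U i) @ u \<in> ideal_words G" "y = u @ v"
        unfolding syz_positions_def by auto
      then show ?thesis using ideal_words_append_right by fastforce
    qed
    then show "p \<in> syz_positions n G U" using p py unfolding mono_closure_def syz_positions_def by auto
  qed
  show "syz_positions n G U \<subseteq> mono_closure n {..<card (min_positions G U)} G (syz_positions n G U)"
    by (rule subset_mono_closure) (auto simp: syz_positions_def)
qed

text \<open>If \<open>w v\<close> lies in the ideal but neither \<open>w\<close>, \<open>v\<close>, nor any \<open>w v'\<close> for a proper prefix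
  \<open>v'\<close> of \<open>v\<close>, then a minimal word ends \<open>w v\<close> and overlaps \<open>w\<close>, so it is longer than \<open>v\<close>.\<close>
lemma minimal_completion_shorter:
  assumes w: "w \<notin> ideal_words G" and v: "v \<notin> ideal_words G" and wv: "w @ v \<in> ideal_words G"
    and minimal: "\<forall>v' v''. v = v' @ v'' \<longrightarrow> v'' \<noteq> [] \<longrightarrow> w @ v' \<notin> ideal_words G"
  shows "\<exists>t\<in>min_words G. length v < length t"
proof -
  obtain a t c where t: "t \<in> min_words G" and eq: "w @ v = a @ t @ c"
    using min_word_factor[OF wv] by blast
  have tI: "t \<in> ideal_words G" using t min_words_ideal_words by blast
  have "c = []"
  proof (rule ccontr)
    assume "c \<noteq> []"
    obtain us where "(w = (a @ t) @ us \<and> us @ v = c) \<or> (w @ us = a @ t \<and> v = us @ c)"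
      using eq append_eq_append_conv2[of w v "a @ t" c] by auto
    then show False
    proof
      assume "w = (a @ t) @ us \<and> us @ v = c"
      then show False using w ideal_words_append[OF tI, of a us] by simp
    next
      assume h: "w @ us = a @ t \<and> v = us @ c"
      then have "w @ us \<in> ideal_words G" using ideal_words_append_left[OF tI, of a] by simp
      then show False using minimal \<open>c \<noteq> []\<close> h by blast
    qed
  qed
  then have eq': "w @ v = a @ t" using eq by simp
  obtain us where "(w = a @ us \<and> us @ v = t) \<or> (w @ us = a \<and> v = us @ t)"
    using eq' unfolding append_eq_append_conv2 by blast
  then show ?thesis
  proof
    assume h: "w = a @ us \<and> us @ v = t"
    have "us \<noteq> []" using h v tI by auto
    then show ?thesis using h t by (intro bexI[of _ t]) auto
  next
    assume "w @ us = a \<and> v = us @ t"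
    then show ?thesis using v ideal_words_append_left[OF tI] by simp
  qed
qed

lemma min_syz_position_bound:
  assumes fin: "finite (min_positions G U)"
    and p: "p \<in> min_positions G (syz_positions n G U)"
  shows "fst p < card (min_positions G U) \<and> set (snd p) \<subseteq> {..<n} \<and>
         (\<exists>t\<in>min_words G. length (snd p) < length t)"
proof -
  obtain j v where pv: "p = (j, v)" by (cases p)
  have jv: "j < card (min_positions G U)" "set v \<subseteq> {..<n}"
      "snd (enum_min G U j) @ v \<in> ideal_words G" "v \<notin> ideal_words G"
    using p pv min_positions_subset[of G "syz_positions n G U"]
    unfolding syz_positions_def min_positions_def by auto
  have "enum_min G U j \<in> min_positions G U"
    using enum_min_bij[OF fin] jv(1) unfolding bij_betw_def by auto
  then have w: "snd (enum_min G U j) \<notin> ideal_words G" unfolding min_positions_def by auto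
  have "\<forall>v' v''. v = v' @ v'' \<longrightarrow> v'' \<noteq> [] \<longrightarrow> snd (enum_min G U j) @ v' \<notin> ideal_words G"
  proof (intro allI impI)
    fix v' v'' assume h: "v = v' @ v''" "v'' \<noteq> []"
    then have "(j, v') \<notin> syz_positions n G U" using min_positions_minimal p pv by blast
    then show "snd (enum_min G U j) @ v' \<notin> ideal_words G" using jv h unfolding syz_positions_def by auto
  qed
  then show ?thesis using minimal_completion_shorter[OF w jv(4) jv(3)] jv pv by simp
qed

lemma finite_min_syz_positions:
  assumes fin: "finite (min_positions G U)" and finG: "finite G"
  shows "finite (min_positions G (syz_positions n G U))"
proof -
  define L where "L = Max (length ` G)"
  have "min_positions G (syz_positions n G U) \<subseteq>
      {..<card (min_positions G U)} \<times> {v. set v \<subseteq> {..<n} \<and> length v \<le> L}"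
  proof
    fix p assume p: "p \<in> min_positions G (syz_positions n G U)"
    obtain t where t: "t \<in> min_words G" "length (snd p) < length t"
      using min_syz_position_bound[OF fin p] by blast
    have "length t \<le> L" unfolding L_def using t(1) min_words_subset finG by (auto intro: Max_ge)
    then show "p \<in> {..<card (min_positions G U)} \<times> {v. set v \<subseteq> {..<n} \<and> length v \<le> L}"
      using min_syz_position_bound[OF fin p] t by (cases p) auto
  qed
  moreover have "finite ({..<card (min_positions G U)} \<times> {v. set v \<subseteq> {..<n} \<and> length v \<le> L})"
    by (intro finite_cartesian_product finite_lists_length_le) auto
  ultimately show ?thesis by (rule finite_subset)
qed

theorem syzygies_eq_Free_on_syz_positions:
  assumes fin: "finite (min_positions G U)"
    and U: "U \<subseteq> {(j, w). j \<in> J \<and> set w \<subseteq> {..<n}}"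
    and G: "\<forall>g\<in>G. set g \<subseteq> {..<n}"
  defines "c \<equiv> card (min_positions G U)"
  shows "{x. isFree n {..<c} x \<and>
      dmap {..<c} (\<lambda>j. vec (fst (enum_min G U j)) (snd (enum_min G U j))) x
        \<in> Ipart n J (tideal n (mono ` G))} =
    (Free_on n {..<c} (syz_positions n G U) :: (nat \<Rightarrow> nat list \<Rightarrow> 'k::field) set)"
proof -
  have "{x. isFree n {..<c} x \<and>
      dmap {..<c} (\<lambda>j. vec (fst (enum_min G U j)) (snd (enum_min G U j))) x
        \<in> Ipart n J (tideal n (mono ` G))} =
    {x :: nat \<Rightarrow> nat list \<Rightarrow> 'k. isFree n {..<c} x \<and>
      (\<forall>j v. x j v \<noteq> 0 \<longrightarrow> snd (enum_min G U j) @ v \<in> ideal_words G)}"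
    using dmap_vec_in_Ipart_iff[OF enum_min_bij[OF fin] U G] unfolding c_def by blast
  also have "\<dots> = Free_on n {..<c} (syz_positions n G U)"
    unfolding Free_on_def syz_positions_def isFree_def c_def by auto
  finally show ?thesis .
qed

section \<open>The resolution\<close>

lemma bI_monomial:
  assumes G: "\<forall>g\<in>G. set g \<subseteq> {..<n}" and finG: "finite G"
  shows "bI n k (tideal n (mono ` G) :: (nat list \<Rightarrow> 'k::field) set) =
    card {t \<in> min_words G. int (length t) = k}"
proof -
  define B where "B = (SOME B. minbasis_ideal n (tideal n (mono ` G)) (B :: (nat list \<Rightarrow> 'k) set))"
  have "minbasis_ideal n (tideal n (mono ` G)) B"
    unfolding B_def using minbasis_ideal_min_words[OF G] by (rule someI)
  then interpret monomial_ideal_basis n G B by unfold_locales (use G in auto)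
  show ?thesis
    using card_basis_degree[OF finG, of k] unfolding bI_def B_def min_words_deg_def by simp
qed

lemma bM_monomial:
  assumes G: "\<forall>g\<in>G. set g \<subseteq> {..<n}"
    and S: "S \<subseteq> {(j, w). j \<in> J \<and> set w \<subseteq> {..<n}}"
    and fin: "finite (min_positions G (mono_closure n J G S))"
  shows "bM n J D (tideal n (mono ` G)) k
      (Free_on n J (mono_closure n J G S) :: (nat \<Rightarrow> nat list \<Rightarrow> 'k::field) set) =
    card {p \<in> min_positions G (mono_closure n J G S). D (fst p) + int (length (snd p)) = k}"
proof -
  define B where "B = (SOME B. minbasis n J D (tideal n (mono ` G))
    (Free_on n J (mono_closure n J G S)) (B :: (nat \<Rightarrow> nat list \<Rightarrow> 'k) set))"
  have "minbasis n J D (tideal n (mono ` G)) (Free_on n J (mono_closure n J G S)) B"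
    unfolding B_def using minbasis_min_positions[OF G S] by (rule someI)
  then interpret monomial_submodule_basis n J D G S B by unfold_locales (use G S in auto)
  show ?thesis
    using card_basis_degree[OF fin, of k] unfolding bM_def B_def min_positions_deg_def by simp
qed

text \<open>The resolution of \<open>N\<close> built from a monomial submodule with position set \<open>U\<^sub>0\<close>: the
  \<open>(k+1)\<close>-st free module has one basis vector for each minimal position of \<open>U\<^sub>k\<close>, mapped to
  the corresponding monomial, and \<open>U\<^sub>k\<^sub>+\<^sub>1\<close> is the set of syzygy positions of \<open>U\<^sub>k\<close>.\<close>
locale monomial_resolution =
  fixes n r :: nat and G :: "nat list set" and \<delta> :: "nat \<Rightarrow> int" and S :: "(nat \<times> nat list) set"
  assumes letters: "\<forall>g\<in>G. set g \<subseteq> {..<n}" and finite_gens: "finite G"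
    and positions: "S \<subseteq> {(j, w). j \<in> {..<r} \<and> set w \<subseteq> {..<n}}"
    and finite_min: "finite (min_positions G (mono_closure n {..<r} G S))"
begin

primrec res_positions :: "nat \<Rightarrow> (nat \<times> nat list) set" where
  "res_positions 0 = mono_closure n {..<r} G S"
| "res_positions (Suc k) = syz_positions n G (res_positions k)"

abbreviation "res_enum k \<equiv> enum_min G (res_positions k)"

fun res_index :: "nat \<Rightarrow> nat set" where
  "res_index 0 = {..<r}"
| "res_index (Suc k) = {..<card (min_positions G (res_positions k))}"

primrec res_degree :: "nat \<Rightarrow> nat \<Rightarrow> int" where
  "res_degree 0 = \<delta>"
| "res_degree (Suc k) = (\<lambda>j. res_degree k (fst (res_enum k j)) + int (length (snd (res_enum k j))))"

fun res_map :: "nat \<Rightarrow> nat \<Rightarrow> nat \<Rightarrow> nat list \<Rightarrow> 'k::field" where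
  "res_map 0 = (\<lambda>_ _ _. 0)"
| "res_map (Suc k) = (\<lambda>j. vec (fst (res_enum k j)) (snd (res_enum k j)))"

lemma res_positions_invariant:
  "res_positions k \<subseteq> {(j, w). j \<in> res_index k \<and> set w \<subseteq> {..<n}} \<and>
   mono_closure n (res_index k) G (res_positions k) = res_positions k \<and>
   finite (min_positions G (res_positions k))"
proof (induction k)
  case 0
  then show ?case
    using finite_min mono_closure_positions[of n "{..<r}" G S] mono_closure_idem by simp
next
  case (Suc k)
  then show ?case
    using mono_closure_syz_positions finite_min_syz_positions[OF _ finite_gens]
    by (auto simp: syz_positions_def)
qed

lemmas res_positions_range = res_positions_invariant[THEN conjunct1]
lemmas res_positions_closed = res_positions_invariant[THEN conjunct2, THEN conjunct1]
lemmas finite_min_res_positions = res_positions_invariant[THEN conjunct2, THEN conjunct2]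

lemma res_enum_bij: "bij_betw (res_enum k) (res_index (Suc k)) (min_positions G (res_positions k))"
  using enum_min_bij[OF finite_min_res_positions] by simp

lemma res_enum_range:
  "j \<in> res_index (Suc k) \<Longrightarrow> fst (res_enum k j) \<in> res_index k \<and> set (snd (res_enum k j)) \<subseteq> {..<n}"
proof -
  assume "j \<in> res_index (Suc k)"
  then have "res_enum k j \<in> res_positions k"
    by (rule subsetD[OF min_positions_subset bij_betw_apply[OF res_enum_bij]])
  then show ?thesis using res_positions_range[of k] by (cases "res_enum k j") auto
qed

lemma res_map_image:
  "(res_map (Suc k) ` res_index (Suc k) :: (nat \<Rightarrow> nat list \<Rightarrow> 'k::field) set) =
    vecs (min_positions G (res_positions k))"
proof -
  have "res_map (Suc k) ` res_index (Suc k) =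
      (\<lambda>(j, w). vec j w) ` (res_enum k ` res_index (Suc k))"
    by (simp add: image_image case_prod_beta)
  then show ?thesis using bij_betw_imp_surj_on[OF res_enum_bij] unfolding vecs_def by simp
qed

lemma Msyz_res:
  "Msyz n (tideal n (mono ` G)) res_index res_map (Suc k) =
    (Free_on n (res_index k) (res_positions k) :: (nat \<Rightarrow> nat list \<Rightarrow> 'k::field) set)"
proof -
  have "min_positions G (res_positions k) \<subseteq> {(j, w). j \<in> res_index k \<and> set w \<subseteq> {..<n}}"
    using min_positions_subset res_positions_range by blast
  then show ?thesis
    unfolding Msyz_def res_map_image using rsub_vecs_eq_Free_on[OF letters]
    by (metis diff_Suc_1 res_positions_closed mono_closure_min_positions)
qed

lemma res_graded_free:
  "graded_free_res n (tideal n (mono ` G)) res_index res_degree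
     (res_map :: nat \<Rightarrow> nat \<Rightarrow> nat \<Rightarrow> nat list \<Rightarrow> 'k::field) (Free_on n {..<r} (res_positions 0))"
  unfolding graded_free_res_def
proof (intro conjI allI impI ballI)
  fix k j assume "1 \<le> k" "j \<in> res_index k"
  then obtain k' where k: "k = Suc k'" and j: "j \<in> res_index (Suc k')" by (cases k) auto
  show "isFree n (res_index (k - 1)) (res_map k j :: nat \<Rightarrow> nat list \<Rightarrow> 'k)"
    using res_enum_range[OF j] k by (auto intro: isFree_vec)
  show "homog (res_degree (k - 1)) (res_degree k j) (res_map k j :: nat \<Rightarrow> nat list \<Rightarrow> 'k)"
    using k homog_vec by simp
next
  show "Msyz n (tideal n (mono ` G)) res_index (res_map :: nat \<Rightarrow> nat \<Rightarrow> nat \<Rightarrow> nat list \<Rightarrow> 'k) 1 =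
      Free_on n {..<r} (res_positions 0)"
    using Msyz_res[of 0] by simp
next
  fix k :: nat assume "1 \<le> k"
  then obtain k' where k: "k = Suc k'" by (cases k) auto
  have "res_positions k' \<subseteq> {(j, w). j \<in> res_index k' \<and> set w \<subseteq> {..<n}}"
    by (rule res_positions_range)
  from syzygies_eq_Free_on_syz_positions[OF finite_min_res_positions this letters, where 'k='k]
  show "Msyz n (tideal n (mono ` G)) res_index (res_map :: nat \<Rightarrow> nat \<Rightarrow> nat \<Rightarrow> nat list \<Rightarrow> 'k) (Suc k) =
      {x. isFree n (res_index k) x \<and>
        dmap (res_index k) (res_map k) x \<in> Ipart n (res_index (k - 1)) (tideal n (mono ` G))}"
    using Msyz_res[of k] k by simp
qed

lemma res_minimal:
  "minimal_res n (tideal n (mono ` G)) res_index res_degree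
     (res_map :: nat \<Rightarrow> nat \<Rightarrow> nat \<Rightarrow> nat list \<Rightarrow> 'k::field)"
  unfolding minimal_res_def
proof (intro allI impI conjI)
  fix k :: nat assume "1 \<le> k"
  then obtain k' where k: "k = Suc k'" by (cases k) auto
  show "inj_on (res_map k :: nat \<Rightarrow> nat \<Rightarrow> nat list \<Rightarrow> 'k) (res_index k)"
  proof (rule inj_onI)
    fix a b assume ab: "a \<in> res_index k" "b \<in> res_index k"
      "(res_map k a :: nat \<Rightarrow> nat list \<Rightarrow> 'k) = res_map k b"
    then have "res_enum k' a = res_enum k' b" using k vec_inj by (simp add: prod_eq_iff)
    then show "a = b" using bij_betw_imp_inj_on[OF res_enum_bij[of k']] ab k by (auto dest: inj_onD)
  qed
  have img: "(res_map k ` res_index k :: (nat \<Rightarrow> nat list \<Rightarrow> 'k) set) =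
      vecs (min_positions G (res_positions k'))"
    using k res_map_image by simp
  have ms: "(Msyz n (tideal n (mono ` G)) res_index res_map k :: (nat \<Rightarrow> nat list \<Rightarrow> 'k) set) =
      Free_on n (res_index k') (res_positions k')"
    using k Msyz_res by simp
  have "minbasis n (res_index k') (res_degree k') (tideal n (mono ` G))
      (Free_on n (res_index k') (mono_closure n (res_index k') G (res_positions k')))
      (vecs (min_positions G (mono_closure n (res_index k') G (res_positions k')))
        :: (nat \<Rightarrow> nat list \<Rightarrow> 'k) set)"
    using res_positions_range by (rule minbasis_min_positions[OF letters])
  then show "minbasis n (res_index (k - 1)) (res_degree (k - 1)) (tideal n (mono ` G))
      (Msyz n (tideal n (mono ` G)) res_index res_map k)
      (res_map k ` res_index k :: (nat \<Rightarrow> nat list \<Rightarrow> 'k) set)"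
    unfolding img ms using k res_positions_closed[of k'] by simp
qed

lemma res_syzygies_fg_monomial:
  assumes "1 \<le> i"
  shows "fg_sub n (res_index (i - 1)) (tideal n (mono ` G))
           (Msyz n (tideal n (mono ` G)) res_index (res_map :: nat \<Rightarrow> nat \<Rightarrow> nat \<Rightarrow> nat list \<Rightarrow> 'k::field) i) \<and>
         monomial_sub n (res_index (i - 1)) (tideal n (mono ` G))
           (Msyz n (tideal n (mono ` G)) res_index (res_map :: nat \<Rightarrow> nat \<Rightarrow> nat \<Rightarrow> nat list \<Rightarrow> 'k) i)"
proof -
  obtain k where i: "i = Suc k" using assms by (cases i) auto
  let ?M = "min_positions G (res_positions k)"
  have range: "?M \<subseteq> {(j, w). j \<in> res_index k \<and> set w \<subseteq> {..<n}}"
    using min_positions_subset res_positions_range by blast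
  have Msyz: "Msyz n (tideal n (mono ` G)) res_index (res_map :: nat \<Rightarrow> nat \<Rightarrow> nat \<Rightarrow> nat list \<Rightarrow> 'k) i =
      rsub n (vecs ?M \<union> Ipart n (res_index k) (tideal n (mono ` G)))"
    unfolding Msyz_def i res_map_image by simp
  have "(vecs ?M :: (nat \<Rightarrow> nat list \<Rightarrow> 'k) set) \<subseteq> {x. isFree n (res_index k) x}"
    using range unfolding vecs_def by (auto intro: isFree_vec)
  moreover have "finite (vecs ?M :: (nat \<Rightarrow> nat list \<Rightarrow> 'k) set)"
    using finite_min_res_positions unfolding vecs_def by blast
  ultimately have "fg_sub n (res_index k) (tideal n (mono ` G))
      (rsub n ((vecs ?M :: (nat \<Rightarrow> nat list \<Rightarrow> 'k) set) \<union> Ipart n (res_index k) (tideal n (mono ` G))))"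
    unfolding fg_sub_def by blast
  moreover have "monomial_sub n (res_index k) (tideal n (mono ` G))
      (rsub n ((vecs ?M :: (nat \<Rightarrow> nat list \<Rightarrow> 'k) set) \<union> Ipart n (res_index k) (tideal n (mono ` G))))"
    unfolding monomial_sub_def vecs_def using range by blast
  ultimately show ?thesis unfolding Msyz using i by simp
qed

lemma min_word_length_bound:
  assumes "\<forall>k>d. bI n k (tideal n (mono ` G) :: (nat list \<Rightarrow> 'k::field) set) = 0"
    and t: "t \<in> min_words G"
  shows "int (length t) \<le> d"
proof (rule ccontr)
  define k where "k = int (length t)"
  assume "\<not> int (length t) \<le> d"
  then have "k > d" unfolding k_def by simp
  then have "card {s \<in> min_words G. int (length s) = k} = 0"
    using assms(1) bI_monomial[OF letters finite_gens, where 'k='k] by simp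
  moreover have "finite {s \<in> min_words G. int (length s) = k}"
    using finite_gens min_words_subset by (auto intro: finite_subset)
  ultimately show False using t unfolding k_def by auto
qed

lemma min_position_degree_bound:
  assumes "\<forall>k>\<Delta>. bM n {..<r} \<delta> (tideal n (mono ` G)) k
      (Free_on n {..<r} (res_positions 0) :: (nat \<Rightarrow> nat list \<Rightarrow> 'k::field) set) = 0"
    and p: "p \<in> min_positions G (res_positions 0)"
  shows "\<delta> (fst p) + int (length (snd p)) \<le> \<Delta>"
proof (rule ccontr)
  let ?k = "\<delta> (fst p) + int (length (snd p))"
  assume "\<not> ?k \<le> \<Delta>"
  then have "card {q \<in> min_positions G (res_positions 0). \<delta> (fst q) + int (length (snd q)) = ?k} = 0"
    using assms(1) bM_monomial[OF letters positions finite_min, where 'k='k] by auto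
  moreover have "finite {q \<in> min_positions G (res_positions 0). \<delta> (fst q) + int (length (snd q)) = ?k}"
    using finite_min by auto
  ultimately show False using p by (cases p) auto
qed

text \<open>A minimal syzygy position \<open>(j, v)\<close> has \<open>|v| \<le> d - 1\<close>, and its degree is that of
  the \<open>j\<close>-th minimal position plus \<open>|v|\<close>.\<close>
lemma res_degree_bound:
  assumes d: "\<forall>t\<in>min_words G. int (length t) \<le> d"
    and \<Delta>: "\<forall>p\<in>min_positions G (res_positions 0). \<delta> (fst p) + int (length (snd p)) \<le> \<Delta>"
  shows "\<forall>p\<in>min_positions G (res_positions k).
    res_degree k (fst p) + int (length (snd p)) \<le> \<Delta> + int k * (d - 1)"
proof (induction k)
  case 0 then show ?case using \<Delta> by simp
next
  case (Suc k)
  show ?case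
  proof
    fix p assume p: "p \<in> min_positions G (res_positions (Suc k))"
    have bound: "fst p < card (min_positions G (res_positions k)) \<and> set (snd p) \<subseteq> {..<n} \<and>
        (\<exists>t\<in>min_words G. length (snd p) < length t)"
      using p by (intro min_syz_position_bound[OF finite_min_res_positions]) simp
    then obtain t where t: "t \<in> min_words G" "length (snd p) < length t" by blast
    have j: "fst p \<in> res_index (Suc k)" using bound by simp
    have "res_enum k (fst p) \<in> min_positions G (res_positions k)"
      using bij_betw_apply[OF res_enum_bij j] .
    then have "res_degree (Suc k) (fst p) \<le> \<Delta> + int k * (d - 1)" using Suc.IH by simp
    moreover have "int (length (snd p)) \<le> d - 1" using d t by fastforce
    ultimately show "res_degree (Suc k) (fst p) + int (length (snd p)) \<le> \<Delta> + int (Suc k) * (d - 1)"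
      by (simp add: algebra_simps)
  qed
qed

theorem res_betti_bound:
  assumes d: "\<forall>k>d. bI n k (tideal n (mono ` G) :: (nat list \<Rightarrow> 'k::field) set) = 0"
    and \<Delta>: "\<forall>k>\<Delta>. bM n {..<r} \<delta> (tideal n (mono ` G)) k
      (Free_on n {..<r} (res_positions 0) :: (nat \<Rightarrow> nat list \<Rightarrow> 'k) set) = 0"
    and i: "1 \<le> i" and k: "\<Delta> + (int i - 1) * (d - 1) < k"
  shows "bM n (res_index (i - 1)) (res_degree (i - 1)) (tideal n (mono ` G)) k
    (Msyz n (tideal n (mono ` G)) res_index (res_map :: nat \<Rightarrow> nat \<Rightarrow> nat \<Rightarrow> nat list \<Rightarrow> 'k) i) = 0"
proof -
  obtain k' where k': "i = Suc k'" using i by (cases i) auto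
  have bound: "\<forall>p\<in>min_positions G (res_positions k').
      res_degree k' (fst p) + int (length (snd p)) < k"
    using res_degree_bound[OF ballI[OF min_word_length_bound[OF d]]
        ballI[OF min_position_degree_bound[OF \<Delta>]], of k'] k k' by fastforce
  have "bM n (res_index k') (res_degree k') (tideal n (mono ` G)) k
      (Free_on n (res_index k') (mono_closure n (res_index k') G (res_positions k'))
        :: (nat \<Rightarrow> nat list \<Rightarrow> 'k) set) =
      card {p \<in> min_positions G (res_positions k'). res_degree k' (fst p) + int (length (snd p)) = k}"
    using bM_monomial[OF letters res_positions_range] finite_min_res_positions
    by (simp add: res_positions_closed)
  also have "\<dots> = 0" using bound by (auto intro: card_eq_0_iff[THEN iffD2])
  finally show ?thesis using Msyz_res[of k', where 'k='k] k' res_positions_closed[of k'] by simp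
qed

end

theorem mainTheorem16:
  fixes n r :: nat and I :: "(nat list \<Rightarrow> 'k::field) set"
    and \<delta> :: "nat \<Rightarrow> int" and M :: "(nat \<Rightarrow> nat list \<Rightarrow> 'k) set" and d \<Delta> :: int
  assumes "monomial_ideal_fg n I"
    and "fg_sub n {..<r} I M" and "monomial_sub n {..<r} I M"
  shows "\<exists>J D g. J 0 = {..<r} \<and> D 0 = \<delta> \<and>
      graded_free_res n I J D g M \<and> minimal_res n I J D g \<and>
      (\<forall>i\<ge>1. fg_sub n (J (i - 1)) I (Msyz n I J g i) \<and>
              monomial_sub n (J (i - 1)) I (Msyz n I J g i)) \<and>
      ((\<forall>k>d. bI n k I = 0) \<and> (\<forall>k>\<Delta>. bM n {..<r} \<delta> I k M = 0) \<longrightarrow>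
        (\<forall>i\<ge>1. \<forall>k. k > \<Delta> + (int i - 1) * (d - 1) \<longrightarrow>
           bM n (J (i - 1)) (D (i - 1)) I k (Msyz n I J g i) = 0))"
proof -
  obtain G where finG: "finite G" and G: "\<forall>g\<in>G. set g \<subseteq> {..<n}" and I: "I = tideal n (mono ` G)"
    using assms(1) unfolding monomial_ideal_fg_def by blast
  obtain S where S: "S \<subseteq> {(j, w). j \<in> {..<r} \<and> set w \<subseteq> {..<n}}"
    and MS: "M = rsub n (vecs S \<union> Ipart n {..<r} I)"
    using assms(3) unfolding monomial_sub_def vecs_def by blast
  obtain T where T: "finite T" "T \<subseteq> {x. isFree n {..<r} x}" and MT: "M = rsub n (T \<union> Ipart n {..<r} I)"
    using assms(2) unfolding fg_sub_def by blast
  have M: "M = Free_on n {..<r} (mono_closure n {..<r} G S)"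
    using rsub_vecs_eq_Free_on[OF G S] MS I by simp
  have "finite (min_positions G (mono_closure n {..<r} G S))"
    using finite_min_positions_if_fg[OF G T] M MT I by simp
  then interpret monomial_resolution n r G \<delta> S using G finG S by unfold_locales
  show ?thesis
    using res_graded_free res_minimal res_syzygies_fg_monomial res_betti_bound M I
    by (intro exI[of _ res_index] exI[of _ res_degree] exI[of _ res_map]) auto
qed

end
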